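(* Let $\mathcal E$ be a length exact category satisfying the Jordan–Hölder property. Then $\mathcal P(\operatorname{simp}\mathcal E)\to\operatorname{Serre}(\mathcal E)$, $\mathcal X\mapsto\langle\mathcal X\rangle_{\mathrm{Serre}}$, is an inclusion-preserving bijection.
   Context: An exact category $\mathcal E$ is an additive full subcategory of an abelian category closed under extensions, with conflations the short exact sequences with all terms in $\mathcal E$ and inflations the first maps of conflations. An admissible subobject of $X$ is an equivalence class of inflations $Y\to X$; an admissible subobject series $0=X_0\le\cdots\le X_n=X$ is proper of length $n$ if all factors $X_i/X_{i-1}$ are nonzero. $X$ is of finite length if the lengths of its proper admissible subobject series are bounded; $\mathcal E$ is length if all objects are of finite length. A simple object is a nonzero object whose only admissible subobjects are $0$ and itself; $\operatorname{simp}\mathcal E$ is the set of their isomorphism classes. A composition series is an admissible subobject series with all factors simple; two series are isomorphic if they have the same length $n$ and there is a permutation $\sigma$ with $X_i/X_{i-1}\cong Y_{\sigma(i)}/Y_{\sigma(i)-1}$. $\mathcal E$ satisfies the Jordan–Hölder property if for each object all its composition series are isomorphic. A Serre subcategory is a full additive subcategory $\mathcal S$ closed under isomorphisms such that for each conflation $0\to X\to Y\to Z\to0$, $Y\in\mathcal S$ iff $X,Z\in\mathcal S$; $\langle\mathcal X\rangle_{\mathrm{Serre}}$ is the smallest one containing $\mathcal X$. *)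

theory Defs
  imports Main
begin

(* An abstract (ambient) preadditive category, given by its data:
   objects, arrows, domain, codomain, composition (ccomp C g f = g o f),
   identities, and the abelian group structure on hom-sets. *)
record ('o, 'm) acat =
  Ob :: "'o set"
  Ar :: "'m set"
  cdom :: "'m \<Rightarrow> 'o"
  ccod :: "'m \<Rightarrow> 'o"
  ccomp :: "'m \<Rightarrow> 'm \<Rightarrow> 'm"
  cid :: "'o \<Rightarrow> 'm"
  cadd :: "'m \<Rightarrow> 'm \<Rightarrow> 'm"
  cneg :: "'m \<Rightarrow> 'm"
  czero :: "'o \<Rightarrow> 'o \<Rightarrow> 'm"

definition hom :: "('o,'m) acat \<Rightarrow> 'o \<Rightarrow> 'o \<Rightarrow> 'm set" where
  "hom C A B = {f \<in> Ar C. cdom C f = A \<and> ccod C f = B}"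

definition category :: "('o,'m) acat \<Rightarrow> bool" where
  "category C \<longleftrightarrow>
     (\<forall>f\<in>Ar C. cdom C f \<in> Ob C \<and> ccod C f \<in> Ob C) \<and>
     (\<forall>A\<in>Ob C. cid C A \<in> hom C A A) \<and>
     (\<forall>A B D f g. f \<in> hom C A B \<longrightarrow> g \<in> hom C B D \<longrightarrow> ccomp C g f \<in> hom C A D) \<and>
     (\<forall>A B D F f g h. f \<in> hom C A B \<longrightarrow> g \<in> hom C B D \<longrightarrow> h \<in> hom C D F \<longrightarrow>
        ccomp C h (ccomp C g f) = ccomp C (ccomp C h g) f) \<and>
     (\<forall>A B f. f \<in> hom C A B \<longrightarrow> ccomp C (cid C B) f = f \<and> ccomp C f (cid C A) = f)"

definition preadditive :: "('o,'m) acat \<Rightarrow> bool" where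
  "preadditive C \<longleftrightarrow> category C \<and>
     (\<forall>A\<in>Ob C. \<forall>B\<in>Ob C.
        czero C A B \<in> hom C A B \<and>
        (\<forall>f\<in>hom C A B. cneg C f \<in> hom C A B) \<and>
        (\<forall>f\<in>hom C A B. \<forall>g\<in>hom C A B. cadd C f g \<in> hom C A B) \<and>
        (\<forall>f\<in>hom C A B. \<forall>g\<in>hom C A B. \<forall>h\<in>hom C A B.
            cadd C (cadd C f g) h = cadd C f (cadd C g h)) \<and>
        (\<forall>f\<in>hom C A B. \<forall>g\<in>hom C A B. cadd C f g = cadd C g f) \<and>
        (\<forall>f\<in>hom C A B. cadd C (czero C A B) f = f) \<and>
        (\<forall>f\<in>hom C A B. cadd C f (cneg C f) = czero C A B)) \<and>
     (\<forall>A B D f g h. f \<in> hom C A B \<longrightarrow> g \<in> hom C A B \<longrightarrow> h \<in> hom C B D \<longrightarrow>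
        ccomp C h (cadd C f g) = cadd C (ccomp C h f) (ccomp C h g)) \<and>
     (\<forall>A B D f g h. f \<in> hom C A B \<longrightarrow> g \<in> hom C B D \<longrightarrow> h \<in> hom C B D \<longrightarrow>
        ccomp C (cadd C g h) f = cadd C (ccomp C g f) (ccomp C h f))"

definition zero_obj :: "('o,'m) acat \<Rightarrow> 'o \<Rightarrow> bool" where
  "zero_obj C Z \<longleftrightarrow> Z \<in> Ob C \<and>
     (\<forall>A\<in>Ob C. (\<exists>!f. f \<in> hom C Z A) \<and> (\<exists>!f. f \<in> hom C A Z))"

definition is_biproduct :: "('o,'m) acat \<Rightarrow> 'o \<Rightarrow> 'o \<Rightarrow> 'o \<Rightarrow> 'm \<Rightarrow> 'm \<Rightarrow> 'm \<Rightarrow> 'm \<Rightarrow> bool" where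
  "is_biproduct C A B P i1 i2 p1 p2 \<longleftrightarrow> P \<in> Ob C \<and>
     i1 \<in> hom C A P \<and> i2 \<in> hom C B P \<and> p1 \<in> hom C P A \<and> p2 \<in> hom C P B \<and>
     ccomp C p1 i1 = cid C A \<and> ccomp C p2 i2 = cid C B \<and>
     ccomp C p1 i2 = czero C B A \<and> ccomp C p2 i1 = czero C A B \<and>
     cadd C (ccomp C i1 p1) (ccomp C i2 p2) = cid C P"

definition is_kernel :: "('o,'m) acat \<Rightarrow> 'm \<Rightarrow> 'm \<Rightarrow> bool" where
  "is_kernel C k f \<longleftrightarrow> k \<in> Ar C \<and> f \<in> Ar C \<and> ccod C k = cdom C f \<and>
     ccomp C f k = czero C (cdom C k) (ccod C f) \<and>
     (\<forall>T\<in>Ob C. \<forall>g\<in>hom C T (cdom C f). ccomp C f g = czero C T (ccod C f) \<longrightarrow>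
        (\<exists>!u. u \<in> hom C T (cdom C k) \<and> ccomp C k u = g))"

definition is_cokernel :: "('o,'m) acat \<Rightarrow> 'm \<Rightarrow> 'm \<Rightarrow> bool" where
  "is_cokernel C c f \<longleftrightarrow> c \<in> Ar C \<and> f \<in> Ar C \<and> ccod C f = cdom C c \<and>
     ccomp C c f = czero C (cdom C f) (ccod C c) \<and>
     (\<forall>T\<in>Ob C. \<forall>g\<in>hom C (ccod C f) T. ccomp C g f = czero C (cdom C f) T \<longrightarrow>
        (\<exists>!u. u \<in> hom C (ccod C c) T \<and> ccomp C u c = g))"

definition mono :: "('o,'m) acat \<Rightarrow> 'm \<Rightarrow> bool" where
  "mono C f \<longleftrightarrow> f \<in> Ar C \<and>
     (\<forall>T\<in>Ob C. \<forall>g\<in>hom C T (cdom C f). \<forall>h\<in>hom C T (cdom C f).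
        ccomp C f g = ccomp C f h \<longrightarrow> g = h)"

definition epi :: "('o,'m) acat \<Rightarrow> 'm \<Rightarrow> bool" where
  "epi C f \<longleftrightarrow> f \<in> Ar C \<and>
     (\<forall>T\<in>Ob C. \<forall>g\<in>hom C (ccod C f) T. \<forall>h\<in>hom C (ccod C f) T.
        ccomp C g f = ccomp C h f \<longrightarrow> g = h)"

definition abelian :: "('o,'m) acat \<Rightarrow> bool" where
  "abelian C \<longleftrightarrow> preadditive C \<and> (\<exists>Z. zero_obj C Z) \<and>
     (\<forall>A\<in>Ob C. \<forall>B\<in>Ob C. \<exists>P i1 i2 p1 p2. is_biproduct C A B P i1 i2 p1 p2) \<and>
     (\<forall>f\<in>Ar C. \<exists>k. is_kernel C k f) \<and>
     (\<forall>f\<in>Ar C. \<exists>c. is_cokernel C c f) \<and>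
     (\<forall>f. mono C f \<longrightarrow> (\<exists>g. is_kernel C f g)) \<and>
     (\<forall>f. epi C f \<longrightarrow> (\<exists>g. is_cokernel C f g))"

definition iso_obj :: "('o,'m) acat \<Rightarrow> 'o \<Rightarrow> 'o \<Rightarrow> bool" where
  "iso_obj C X Y \<longleftrightarrow> (\<exists>f g. f \<in> hom C X Y \<and> g \<in> hom C Y X \<and>
      ccomp C g f = cid C X \<and> ccomp C f g = cid C Y)"

definition iso_mor :: "('o,'m) acat \<Rightarrow> 'm \<Rightarrow> bool" where
  "iso_mor C f \<longleftrightarrow> f \<in> Ar C \<and> (\<exists>g \<in> hom C (ccod C f) (cdom C f).
      ccomp C g f = cid C (cdom C f) \<and> ccomp C f g = cid C (ccod C f))"

definition conflation :: "('o,'m) acat \<Rightarrow> 'o set \<Rightarrow> 'm \<Rightarrow> 'm \<Rightarrow> bool" where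
  "conflation C E i p \<longleftrightarrow> is_kernel C i p \<and> is_cokernel C p i \<and>
     cdom C i \<in> E \<and> ccod C i \<in> E \<and> ccod C p \<in> E"

definition inflation :: "('o,'m) acat \<Rightarrow> 'o set \<Rightarrow> 'm \<Rightarrow> bool" where
  "inflation C E i \<longleftrightarrow> (\<exists>p. conflation C E i p)"

(* E is an exact category: an additive full subcategory of the abelian
   category C closed under extensions *)
definition exact_cat :: "('o,'m) acat \<Rightarrow> 'o set \<Rightarrow> bool" where
  "exact_cat C E \<longleftrightarrow> abelian C \<and> E \<subseteq> Ob C \<and>
     (\<exists>Z\<in>E. zero_obj C Z) \<and>
     (\<forall>A\<in>E. \<forall>B\<in>E. \<forall>P i1 i2 p1 p2. is_biproduct C A B P i1 i2 p1 p2 \<longrightarrow> P \<in> E) \<and>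
     (\<forall>i p. is_kernel C i p \<and> is_cokernel C p i \<and> cdom C i \<in> E \<and> ccod C p \<in> E
        \<longrightarrow> ccod C i \<in> E)"

(* an admissible subobject series 0 = X_0 >-> X_1 >-> ... >-> X_n = X of length n,
   given by objects Xs k and inflations fs k : Xs (k-1) >-> Xs k, 1 <= k <= n *)
definition subobj_series ::
  "('o,'m) acat \<Rightarrow> 'o set \<Rightarrow> 'o \<Rightarrow> nat \<Rightarrow> (nat \<Rightarrow> 'o) \<Rightarrow> (nat \<Rightarrow> 'm) \<Rightarrow> bool" where
  "subobj_series C E X n Xs fs \<longleftrightarrow> zero_obj C (Xs 0) \<and> Xs n = X \<and>
     (\<forall>k\<in>{1..n}. inflation C E (fs k) \<and> cdom C (fs k) = Xs (k - 1) \<and> ccod C (fs k) = Xs k)"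

(* Z is (a representative of) the factor X_k / X_(k-1) *)
definition series_factor :: "('o,'m) acat \<Rightarrow> 'o set \<Rightarrow> (nat \<Rightarrow> 'm) \<Rightarrow> nat \<Rightarrow> 'o \<Rightarrow> bool" where
  "series_factor C E fs k Z \<longleftrightarrow> (\<exists>p. conflation C E (fs k) p \<and> ccod C p = Z)"

definition proper_series ::
  "('o,'m) acat \<Rightarrow> 'o set \<Rightarrow> 'o \<Rightarrow> nat \<Rightarrow> (nat \<Rightarrow> 'o) \<Rightarrow> (nat \<Rightarrow> 'm) \<Rightarrow> bool" where
  "proper_series C E X n Xs fs \<longleftrightarrow> subobj_series C E X n Xs fs \<and>
     (\<forall>k\<in>{1..n}. \<forall>Z. series_factor C E fs k Z \<longrightarrow> \<not> zero_obj C Z)"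

definition finite_length :: "('o,'m) acat \<Rightarrow> 'o set \<Rightarrow> 'o \<Rightarrow> bool" where
  "finite_length C E X \<longleftrightarrow> (\<exists>N. \<forall>n Xs fs. proper_series C E X n Xs fs \<longrightarrow> n \<le> N)"

definition length_cat :: "('o,'m) acat \<Rightarrow> 'o set \<Rightarrow> bool" where
  "length_cat C E \<longleftrightarrow> (\<forall>X\<in>E. finite_length C E X)"

definition simple_obj :: "('o,'m) acat \<Rightarrow> 'o set \<Rightarrow> 'o \<Rightarrow> bool" where
  "simple_obj C E S \<longleftrightarrow> S \<in> E \<and> \<not> zero_obj C S \<and>
     (\<forall>i. inflation C E i \<and> ccod C i = S \<longrightarrow> zero_obj C (cdom C i) \<or> iso_mor C i)"

definition composition_series ::
  "('o,'m) acat \<Rightarrow> 'o set \<Rightarrow> 'o \<Rightarrow> nat \<Rightarrow> (nat \<Rightarrow> 'o) \<Rightarrow> (nat \<Rightarrow> 'm) \<Rightarrow> bool" where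
  "composition_series C E X n Xs fs \<longleftrightarrow> subobj_series C E X n Xs fs \<and>
     (\<forall>k\<in>{1..n}. \<forall>Z. series_factor C E fs k Z \<longrightarrow> simple_obj C E Z)"

definition jordan_hoelder :: "('o,'m) acat \<Rightarrow> 'o set \<Rightarrow> bool" where
  "jordan_hoelder C E \<longleftrightarrow>
     (\<forall>X\<in>E. \<forall>n Xs fs m Ys gs.
        composition_series C E X n Xs fs \<and> composition_series C E X m Ys gs \<longrightarrow>
        n = m \<and> (\<exists>\<sigma>. bij_betw \<sigma> {1..n} {1..n} \<and>
           (\<forall>k\<in>{1..n}. \<exists>Z Z'. series_factor C E fs k Z \<and> series_factor C E gs (\<sigma> k) Z'
              \<and> iso_obj C Z Z')))"

definition iso_class :: "('o,'m) acat \<Rightarrow> 'o set \<Rightarrow> 'o \<Rightarrow> 'o set" where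
  "iso_class C E X = {Y \<in> E. iso_obj C Y X}"

definition simp_classes :: "('o,'m) acat \<Rightarrow> 'o set \<Rightarrow> 'o set set" where
  "simp_classes C E = {iso_class C E S | S. simple_obj C E S}"

definition serre_subcat :: "('o,'m) acat \<Rightarrow> 'o set \<Rightarrow> 'o set \<Rightarrow> bool" where
  "serre_subcat C E S \<longleftrightarrow> S \<subseteq> E \<and> (\<exists>Z\<in>S. zero_obj C Z) \<and>
     (\<forall>X\<in>S. \<forall>Y\<in>E. iso_obj C X Y \<longrightarrow> Y \<in> S) \<and>
     (\<forall>A\<in>S. \<forall>B\<in>S. \<forall>P i1 i2 p1 p2. is_biproduct C A B P i1 i2 p1 p2 \<longrightarrow> P \<in> S) \<and>
     (\<forall>i p. conflation C E i p \<longrightarrow>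
        (ccod C i \<in> S \<longleftrightarrow> cdom C i \<in> S \<and> ccod C p \<in> S))"

definition serre_subcats :: "('o,'m) acat \<Rightarrow> 'o set \<Rightarrow> 'o set set" where
  "serre_subcats C E = {S. serre_subcat C E S}"

definition serre_closure :: "('o,'m) acat \<Rightarrow> 'o set \<Rightarrow> 'o set \<Rightarrow> 'o set" where
  "serre_closure C E X = \<Inter> {S. serre_subcat C E S \<and> X \<subseteq> S}"

end

theory Submission
  imports Defs
begin

text \<open>
  A Serre subcategory \<open>S\<close> is generated by the simple objects it contains: every object of
  \<open>S\<close> has a composition series (by induction on the bound for the lengths of its proper
  series), and all terms and factors of such a series lie in \<open>S\<close>.

  Conversely, for a set \<open>U\<close> of isomorphism classes of simple objects let \<open>T(U)\<close> be the
  class of objects all of whose composition factors lie in \<open>U\<close>. Composition series of \<open>X\<close>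
  and of \<open>Z\<close> glue to one of \<open>Y\<close> along a conflation \<open>X \<rightarrowtail> Y \<twoheadrightarrow> Z\<close>: the series of
  \<open>Z\<close> is pulled back along \<open>Y \<twoheadrightarrow> Z\<close> term by term, each pullback being a kernel of a
  composite deflation. Together with the Jordan-Hoelder property this makes \<open>T(U)\<close> a Serre
  subcategory. It contains \<open>U\<close> but no other simple object, so the Serre closure of \<open>U\<close>
  determines \<open>U\<close>.
\<close>

section \<open>Additive structure of an abelian category\<close>

named_theorems comp_simps

locale abelian_category =
  fixes C :: "('o,'m) acat"
  assumes abelian: "abelian C"
begin

abbreviation arr_comp (infixl "\<cdot>" 70) where "g \<cdot> f \<equiv> ccomp C g f"
abbreviation arr_add (infixl "\<oplus>" 65) where "f \<oplus> g \<equiv> cadd C f g"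

lemma is_preadditive: "preadditive C"
  using abelian unfolding abelian_def by blast

lemma is_category: "category C"
  using is_preadditive unfolding preadditive_def by blast

lemma in_homI: "f \<in> Ar C \<Longrightarrow> f \<in> hom C (cdom C f) (ccod C f)"
  by (simp add: hom_def)

lemma in_homD: "f \<in> hom C A B \<Longrightarrow> f \<in> Ar C \<and> cdom C f = A \<and> ccod C f = B"
  by (simp add: hom_def)

lemma in_hom_Ob: "f \<in> hom C A B \<Longrightarrow> A \<in> Ob C \<and> B \<in> Ob C"
  using is_category unfolding category_def hom_def by blast

lemma id_in_hom: "A \<in> Ob C \<Longrightarrow> cid C A \<in> hom C A A"
  using is_category unfolding category_def by blast

lemma comp_in_hom: "f \<in> hom C A B \<Longrightarrow> g \<in> hom C B D \<Longrightarrow> g \<cdot> f \<in> hom C A D"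
  using is_category unfolding category_def by blast

lemma comp_assoc:
  "f \<in> hom C A B \<Longrightarrow> g \<in> hom C B D \<Longrightarrow> h \<in> hom C D F \<Longrightarrow> h \<cdot> (g \<cdot> f) = (h \<cdot> g) \<cdot> f"
  using is_category unfolding category_def by blast

lemma comp_id_left: "f \<in> hom C A B \<Longrightarrow> cid C B \<cdot> f = f"
  using is_category unfolding category_def by blast

lemma comp_id_right: "f \<in> hom C A B \<Longrightarrow> f \<cdot> cid C A = f"
  using is_category unfolding category_def by blast

lemma hom_abelian_group:
  assumes "A \<in> Ob C" and "B \<in> Ob C"
  shows "czero C A B \<in> hom C A B \<and>
        (\<forall>f\<in>hom C A B. cneg C f \<in> hom C A B) \<and>
        (\<forall>f\<in>hom C A B. \<forall>g\<in>hom C A B. f \<oplus> g \<in> hom C A B) \<and>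
        (\<forall>f\<in>hom C A B. \<forall>g\<in>hom C A B. \<forall>h\<in>hom C A B. (f \<oplus> g) \<oplus> h = f \<oplus> (g \<oplus> h)) \<and>
        (\<forall>f\<in>hom C A B. \<forall>g\<in>hom C A B. f \<oplus> g = g \<oplus> f) \<and>
        (\<forall>f\<in>hom C A B. czero C A B \<oplus> f = f) \<and>
        (\<forall>f\<in>hom C A B. f \<oplus> cneg C f = czero C A B)"
  using is_preadditive assms unfolding preadditive_def by (elim conjE) blast

lemma zero_in_hom: "A \<in> Ob C \<Longrightarrow> B \<in> Ob C \<Longrightarrow> czero C A B \<in> hom C A B"
  using is_preadditive unfolding preadditive_def by (elim conjE) blast

lemma neg_in_hom: "f \<in> hom C A B \<Longrightarrow> cneg C f \<in> hom C A B"
  using hom_abelian_group[of A B] in_hom_Ob by blast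

lemma add_in_hom: "f \<in> hom C A B \<Longrightarrow> g \<in> hom C A B \<Longrightarrow> f \<oplus> g \<in> hom C A B"
  using hom_abelian_group[of A B] in_hom_Ob by blast

lemma hom_add_assoc:
  "f \<in> hom C A B \<Longrightarrow> g \<in> hom C A B \<Longrightarrow> h \<in> hom C A B \<Longrightarrow> (f \<oplus> g) \<oplus> h = f \<oplus> (g \<oplus> h)"
  using hom_abelian_group[of A B] in_hom_Ob by blast

lemma hom_add_commute: "f \<in> hom C A B \<Longrightarrow> g \<in> hom C A B \<Longrightarrow> f \<oplus> g = g \<oplus> f"
  using hom_abelian_group[of A B] in_hom_Ob by blast

lemma hom_add_zero_left: "f \<in> hom C A B \<Longrightarrow> czero C A B \<oplus> f = f"
  using hom_abelian_group[of A B] in_hom_Ob by blast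

lemma hom_add_neg: "f \<in> hom C A B \<Longrightarrow> f \<oplus> cneg C f = czero C A B"
  using hom_abelian_group[of A B] in_hom_Ob by blast

lemma comp_add_distrib_left:
  "f \<in> hom C A B \<Longrightarrow> g \<in> hom C A B \<Longrightarrow> h \<in> hom C B D \<Longrightarrow> h \<cdot> (f \<oplus> g) = (h \<cdot> f) \<oplus> (h \<cdot> g)"
  using is_preadditive unfolding preadditive_def by (elim conjE) blast

lemma comp_add_distrib_right:
  "f \<in> hom C A B \<Longrightarrow> g \<in> hom C B D \<Longrightarrow> h \<in> hom C B D \<Longrightarrow> (g \<oplus> h) \<cdot> f = (g \<cdot> f) \<oplus> (h \<cdot> f)"
  using is_preadditive unfolding preadditive_def by (elim conjE) meson


lemma hom_add_zero_right: "f \<in> hom C A B \<Longrightarrow> f \<oplus> czero C A B = f"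
  by (metis hom_add_zero_left hom_add_commute in_hom_Ob zero_in_hom)

lemma hom_neg_add: "f \<in> hom C A B \<Longrightarrow> cneg C f \<oplus> f = czero C A B"
  by (metis hom_add_commute hom_add_neg neg_in_hom)

lemma hom_add_left_cancel:
  assumes x: "x \<in> hom C A B" and y: "y \<in> hom C A B" and z: "z \<in> hom C A B"
    and eq: "x \<oplus> y = x \<oplus> z"
  shows "y = z"
proof -
  have "y = (cneg C x \<oplus> x) \<oplus> y" using hom_add_zero_left hom_neg_add x y by metis
  also have "\<dots> = cneg C x \<oplus> (x \<oplus> y)" using hom_add_assoc neg_in_hom x y by metis
  also have "\<dots> = cneg C x \<oplus> (x \<oplus> z)" using eq by simp
  also have "\<dots> = (cneg C x \<oplus> x) \<oplus> z" using hom_add_assoc neg_in_hom x z by metis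
  also have "\<dots> = z" using hom_add_zero_left hom_neg_add x z by metis
  finally show ?thesis .
qed

lemma hom_add_idem_eq_zero: "x \<in> hom C A B \<Longrightarrow> x \<oplus> x = x \<Longrightarrow> x = czero C A B"
  by (metis hom_add_zero_right hom_add_left_cancel in_hom_Ob zero_in_hom)

lemma hom_eq_if_diff_zero:
  assumes f: "f \<in> hom C A B" and g: "g \<in> hom C A B" and diff: "f \<oplus> cneg C g = czero C A B"
  shows "f = g"
proof -
  have "f = f \<oplus> (cneg C g \<oplus> g)" using hom_add_zero_right hom_neg_add f g by metis
  also have "\<dots> = (f \<oplus> cneg C g) \<oplus> g" using hom_add_assoc neg_in_hom f g by metis
  also have "\<dots> = g" using diff hom_add_zero_left g by simp
  finally show ?thesis .
qed

lemma comp_zero_right: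
  assumes h: "h \<in> hom C B D" and A: "A \<in> Ob C"
  shows "h \<cdot> czero C A B = czero C A D"
proof -
  have z: "czero C A B \<in> hom C A B" using zero_in_hom A in_hom_Ob h by blast
  have "h \<cdot> czero C A B = (h \<cdot> czero C A B) \<oplus> (h \<cdot> czero C A B)"
    using comp_add_distrib_left[OF z z h] hom_add_zero_left[OF z] by simp
  then show ?thesis using hom_add_idem_eq_zero comp_in_hom z h by metis
qed

lemma comp_zero_left:
  assumes f: "f \<in> hom C A B" and D: "D \<in> Ob C"
  shows "czero C B D \<cdot> f = czero C A D"
proof -
  have z: "czero C B D \<in> hom C B D" using zero_in_hom D in_hom_Ob f by blast
  have "czero C B D \<cdot> f = (czero C B D \<cdot> f) \<oplus> (czero C B D \<cdot> f)"
    using comp_add_distrib_right[OF f z z] hom_add_zero_left[OF z] by simp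
  then show ?thesis using hom_add_idem_eq_zero comp_in_hom z f by metis
qed

lemma neg_comp:
  assumes f: "f \<in> hom C B D" and g: "g \<in> hom C A B"
  shows "cneg C f \<cdot> g = cneg C (f \<cdot> g)"
proof -
  have fg: "f \<cdot> g \<in> hom C A D" using comp_in_hom f g by blast
  have "(f \<cdot> g) \<oplus> (cneg C f \<cdot> g) = (f \<oplus> cneg C f) \<cdot> g"
    using comp_add_distrib_right f g neg_in_hom by metis
  also have "\<dots> = czero C A D" using hom_add_neg f comp_zero_left g in_hom_Ob by metis
  also have "\<dots> = (f \<cdot> g) \<oplus> cneg C (f \<cdot> g)" using hom_add_neg fg by metis
  finally show ?thesis using hom_add_left_cancel fg comp_in_hom neg_in_hom f g by metis
qed

lemma neg_zero: "A \<in> Ob C \<Longrightarrow> B \<in> Ob C \<Longrightarrow> cneg C (czero C A B) = czero C A B"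
  by (metis hom_add_zero_left hom_add_neg neg_in_hom zero_in_hom)


lemma zero_obj_Ob: "zero_obj C Z \<Longrightarrow> Z \<in> Ob C"
  by (simp add: zero_obj_def)

lemma zero_obj_hom_from:
  assumes z: "zero_obj C Z" and f: "f \<in> hom C Z A"
  shows "f = czero C Z A"
proof -
  have Ob: "A \<in> Ob C" "Z \<in> Ob C" using in_hom_Ob f by auto
  then have "\<exists>!f. f \<in> hom C Z A" using z unfolding zero_obj_def by blast
  then show ?thesis using f zero_in_hom[OF Ob(2,1)] by blast
qed

lemma zero_obj_hom_to:
  assumes z: "zero_obj C Z" and f: "f \<in> hom C A Z"
  shows "f = czero C A Z"
proof -
  have Ob: "A \<in> Ob C" "Z \<in> Ob C" using in_hom_Ob f by auto
  then have "\<exists>!f. f \<in> hom C A Z" using z unfolding zero_obj_def by blast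
  then show ?thesis using f zero_in_hom[OF Ob] by blast
qed

lemma zero_objI:
  assumes Z: "Z \<in> Ob C" and id_zero: "cid C Z = czero C Z Z"
  shows "zero_obj C Z"
  unfolding zero_obj_def
proof (intro conjI ballI)
  fix A assume A: "A \<in> Ob C"
  show "\<exists>!f. f \<in> hom C Z A"
  proof (rule ex1I[of _ "czero C Z A"])
    fix f assume f: "f \<in> hom C Z A"
    then have "f = f \<cdot> cid C Z" using comp_id_right by simp
    also have "\<dots> = czero C Z A" using id_zero comp_zero_right f Z by simp
    finally show "f = czero C Z A" .
  qed (use zero_in_hom Z A in blast)
  show "\<exists>!f. f \<in> hom C A Z"
  proof (rule ex1I[of _ "czero C A Z"])
    fix f assume f: "f \<in> hom C A Z"
    then have "f = cid C Z \<cdot> f" using comp_id_left by simp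
    also have "\<dots> = czero C A Z" using id_zero comp_zero_left f Z by simp
    finally show "f = czero C A Z" .
  qed (use zero_in_hom Z A in blast)
qed (rule Z)

lemma iso_obj_refl: "X \<in> Ob C \<Longrightarrow> iso_obj C X X"
  unfolding iso_obj_def using id_in_hom comp_id_left by blast

lemma iso_obj_sym: "iso_obj C X Y \<Longrightarrow> iso_obj C Y X"
  unfolding iso_obj_def by blast

lemma iso_obj_trans:
  assumes "iso_obj C X Y" "iso_obj C Y W"
  shows "iso_obj C X W"
proof -
  obtain f g where f: "f \<in> hom C X Y" and g: "g \<in> hom C Y X"
    and gf: "g \<cdot> f = cid C X" and fg: "f \<cdot> g = cid C Y"
    using assms(1) unfolding iso_obj_def by blast
  obtain f' g' where f': "f' \<in> hom C Y W" and g': "g' \<in> hom C W Y"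
    and gf': "g' \<cdot> f' = cid C Y" and fg': "f' \<cdot> g' = cid C W"
    using assms(2) unfolding iso_obj_def by blast
  have "(g \<cdot> g') \<cdot> (f' \<cdot> f) = g \<cdot> (g' \<cdot> (f' \<cdot> f))"
    using comp_assoc[OF comp_in_hom[OF f f'] g' g] by simp
  also have "\<dots> = g \<cdot> ((g' \<cdot> f') \<cdot> f)" using comp_assoc[OF f f' g'] by simp
  also have "\<dots> = cid C X" using gf gf' f comp_id_left by simp
  finally have 1: "(g \<cdot> g') \<cdot> (f' \<cdot> f) = cid C X" .
  have "(f' \<cdot> f) \<cdot> (g \<cdot> g') = f' \<cdot> (f \<cdot> (g \<cdot> g'))"
    using comp_assoc[OF comp_in_hom[OF g' g] f f'] by simp
  also have "\<dots> = f' \<cdot> ((f \<cdot> g) \<cdot> g')" using comp_assoc[OF g' g f] by simp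
  also have "\<dots> = cid C W" using fg fg' g' comp_id_left by simp
  finally have 2: "(f' \<cdot> f) \<cdot> (g \<cdot> g') = cid C W" .
  show ?thesis unfolding iso_obj_def using 1 2 comp_in_hom f f' g g' by blast
qed

lemma zero_objs_iso:
  assumes Z: "zero_obj C Z" and Z': "zero_obj C Z'"
  shows "iso_obj C Z Z'"
proof -
  have Ob: "Z \<in> Ob C" "Z' \<in> Ob C" using Z Z' zero_obj_Ob by auto
  have a: "czero C Z Z' \<in> hom C Z Z'" and b: "czero C Z' Z \<in> hom C Z' Z"
    using zero_in_hom Ob by auto
  have "czero C Z' Z \<cdot> czero C Z Z' = cid C Z"
    using zero_obj_hom_from[OF Z comp_in_hom[OF a b]] zero_obj_hom_from[OF Z id_in_hom[OF Ob(1)]]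
    by simp
  moreover have "czero C Z Z' \<cdot> czero C Z' Z = cid C Z'"
    using zero_obj_hom_from[OF Z' comp_in_hom[OF b a]] zero_obj_hom_from[OF Z' id_in_hom[OF Ob(2)]]
    by simp
  ultimately show ?thesis unfolding iso_obj_def using a b by blast
qed

lemma iso_zero_obj:
  assumes iso: "iso_obj C X Z" and Z: "zero_obj C Z"
  shows "zero_obj C X"
proof -
  obtain f g where f: "f \<in> hom C X Z" and g: "g \<in> hom C Z X" and gf: "g \<cdot> f = cid C X"
    using iso unfolding iso_obj_def by blast
  have X: "X \<in> Ob C" using in_hom_Ob f by blast
  have "cid C X = czero C X X"
    using gf zero_obj_hom_to[OF Z f] comp_zero_right[OF g X] by simp
  then show ?thesis using zero_objI X by blast
qed

text \<open>The simp set \<open>comp_simps\<close> computes with arrows given by domain and codomain and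
  normalises composites to right-associated form.\<close>

lemma arr_dom_Ob [comp_simps]: "f \<in> Ar C \<Longrightarrow> cdom C f \<in> Ob C"
  using in_hom_Ob in_homI by blast

lemma arr_cod_Ob [comp_simps]: "f \<in> Ar C \<Longrightarrow> ccod C f \<in> Ob C"
  using in_hom_Ob in_homI by blast

lemma comp_arr_in_hom:
  "f \<in> Ar C \<Longrightarrow> g \<in> Ar C \<Longrightarrow> ccod C f = cdom C g \<Longrightarrow> g \<cdot> f \<in> hom C (cdom C f) (ccod C g)"
  by (rule comp_in_hom) (auto simp: hom_def)

lemma comp_arr [comp_simps]:
  "f \<in> Ar C \<Longrightarrow> g \<in> Ar C \<Longrightarrow> ccod C f = cdom C g \<Longrightarrow> g \<cdot> f \<in> Ar C"
  using comp_arr_in_hom in_homD by blast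

lemma dom_comp [comp_simps]:
  "f \<in> Ar C \<Longrightarrow> g \<in> Ar C \<Longrightarrow> ccod C f = cdom C g \<Longrightarrow> cdom C (g \<cdot> f) = cdom C f"
  using comp_arr_in_hom in_homD by blast

lemma cod_comp [comp_simps]:
  "f \<in> Ar C \<Longrightarrow> g \<in> Ar C \<Longrightarrow> ccod C f = cdom C g \<Longrightarrow> ccod C (g \<cdot> f) = ccod C g"
  using comp_arr_in_hom in_homD by blast

lemma comp_assoc_arr [comp_simps]:
  "f \<in> Ar C \<Longrightarrow> g \<in> Ar C \<Longrightarrow> h \<in> Ar C \<Longrightarrow> ccod C f = cdom C g \<Longrightarrow> ccod C g = cdom C h
    \<Longrightarrow> (h \<cdot> g) \<cdot> f = h \<cdot> (g \<cdot> f)"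
  by (rule sym, rule comp_assoc) (auto simp: hom_def)

lemma id_arr [comp_simps]: "X \<in> Ob C \<Longrightarrow> cid C X \<in> Ar C"
  using id_in_hom in_homD by blast

lemma dom_id [comp_simps]: "X \<in> Ob C \<Longrightarrow> cdom C (cid C X) = X"
  using id_in_hom in_homD by blast

lemma cod_id [comp_simps]: "X \<in> Ob C \<Longrightarrow> ccod C (cid C X) = X"
  using id_in_hom in_homD by blast

lemma comp_id_left_arr [comp_simps]: "f \<in> Ar C \<Longrightarrow> ccod C f = X \<Longrightarrow> cid C X \<cdot> f = f"
  using comp_id_left in_homI by blast

lemma comp_id_right_arr [comp_simps]: "f \<in> Ar C \<Longrightarrow> cdom C f = X \<Longrightarrow> f \<cdot> cid C X = f"
  using comp_id_right in_homI by blast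

lemma zero_arr [comp_simps]: "X \<in> Ob C \<Longrightarrow> Y \<in> Ob C \<Longrightarrow> czero C X Y \<in> Ar C"
  using zero_in_hom in_homD by blast

lemma dom_zero [comp_simps]: "X \<in> Ob C \<Longrightarrow> Y \<in> Ob C \<Longrightarrow> cdom C (czero C X Y) = X"
  using zero_in_hom in_homD by blast

lemma cod_zero [comp_simps]: "X \<in> Ob C \<Longrightarrow> Y \<in> Ob C \<Longrightarrow> ccod C (czero C X Y) = Y"
  using zero_in_hom in_homD by blast

lemma comp_zero_left_arr [comp_simps]:
  "f \<in> Ar C \<Longrightarrow> ccod C f = X \<Longrightarrow> Y \<in> Ob C \<Longrightarrow> czero C X Y \<cdot> f = czero C (cdom C f) Y"
  using comp_zero_left in_homI by blast

lemma comp_zero_right_arr [comp_simps]: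
  "f \<in> Ar C \<Longrightarrow> cdom C f = Y \<Longrightarrow> X \<in> Ob C \<Longrightarrow> f \<cdot> czero C X Y = czero C X (ccod C f)"
  using comp_zero_right in_homI by blast

section \<open>Kernels, cokernels and pullbacks\<close>

lemma kernel_factor:
  assumes "is_kernel C k f" "g \<in> hom C T (cdom C f)" "f \<cdot> g = czero C T (ccod C f)"
  shows "\<exists>!u. u \<in> hom C T (cdom C k) \<and> k \<cdot> u = g"
  using assms in_hom_Ob unfolding is_kernel_def by blast

lemma cokernel_factor:
  assumes "is_cokernel C c f" "g \<in> hom C (ccod C f) T" "g \<cdot> f = czero C (cdom C f) T"
  shows "\<exists>!u. u \<in> hom C (ccod C c) T \<and> u \<cdot> c = g"
  using assms in_hom_Ob unfolding is_cokernel_def by blast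

lemma monoD:
  assumes "mono C k" "g \<in> hom C T (cdom C k)" "h \<in> hom C T (cdom C k)" "k \<cdot> g = k \<cdot> h"
  shows "g = h"
  using assms in_hom_Ob unfolding mono_def by blast

lemma epiD:
  assumes "epi C k" "g \<in> hom C (ccod C k) T" "h \<in> hom C (ccod C k) T" "g \<cdot> k = h \<cdot> k"
  shows "g = h"
  using assms in_hom_Ob unfolding epi_def by blast

lemma kernel_mono:
  assumes k: "is_kernel C k f"
  shows "mono C k"
  unfolding mono_def
proof (intro conjI ballI impI)
  show "k \<in> Ar C" using k unfolding is_kernel_def by blast
  fix T g h assume g: "g \<in> hom C T (cdom C k)" and h: "h \<in> hom C T (cdom C k)"
    and eq: "k \<cdot> g = k \<cdot> h"
  have k': "k \<in> hom C (cdom C k) (cdom C f)" and f: "f \<in> hom C (cdom C f) (ccod C f)"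
    and fk: "f \<cdot> k = czero C (cdom C k) (ccod C f)"
    using k unfolding is_kernel_def hom_def by auto
  have "f \<cdot> (k \<cdot> g) = czero C T (ccod C f)"
    using comp_assoc[OF g k' f] fk comp_zero_left[OF g] in_hom_Ob[OF f] by simp
  then have "\<exists>!u. u \<in> hom C T (cdom C k) \<and> k \<cdot> u = k \<cdot> g"
    using kernel_factor[OF k comp_in_hom[OF g k']] by blast
  then show "g = h" using g h eq by auto
qed

lemma cokernel_epi:
  assumes c: "is_cokernel C c f"
  shows "epi C c"
  unfolding epi_def
proof (intro conjI ballI impI)
  show "c \<in> Ar C" using c unfolding is_cokernel_def by blast
  fix T g h assume g: "g \<in> hom C (ccod C c) T" and h: "h \<in> hom C (ccod C c) T"
    and eq: "g \<cdot> c = h \<cdot> c"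
  have c': "c \<in> hom C (ccod C f) (ccod C c)" and f: "f \<in> hom C (cdom C f) (ccod C f)"
    and cf: "c \<cdot> f = czero C (cdom C f) (ccod C c)"
    using c unfolding is_cokernel_def hom_def by auto
  have "(g \<cdot> c) \<cdot> f = czero C (cdom C f) T"
    using comp_assoc[OF f c' g] cf comp_zero_right[OF g] in_hom_Ob[OF f] by simp
  then have "\<exists>!u. u \<in> hom C (ccod C c) T \<and> u \<cdot> c = g \<cdot> c"
    using cokernel_factor[OF c comp_in_hom[OF c' g]] by blast
  then show "g = h" using g h eq by auto
qed

lemma kernel_arrD:
  assumes "is_kernel C k f"
  shows "k \<in> Ar C" "f \<in> Ar C" "ccod C k = cdom C f" "f \<cdot> k = czero C (cdom C k) (ccod C f)"
  using assms unfolding is_kernel_def by auto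

lemma cokernel_arrD:
  assumes "is_cokernel C c f"
  shows "c \<in> Ar C" "f \<in> Ar C" "ccod C f = cdom C c" "c \<cdot> f = czero C (cdom C f) (ccod C c)"
  using assms unfolding is_cokernel_def by auto

lemma kernel_factorE:
  assumes k: "is_kernel C k f" and g: "g \<in> Ar C" "ccod C g = cdom C f"
    and fg: "f \<cdot> g = czero C (cdom C g) (ccod C f)"
  obtains u where "u \<in> Ar C" "cdom C u = cdom C g" "ccod C u = cdom C k" "k \<cdot> u = g"
proof -
  have "g \<in> hom C (cdom C g) (cdom C f)" using g by (simp add: hom_def)
  from kernel_factor[OF k this fg] show ?thesis using that by (auto simp: hom_def)
qed

lemma cokernel_factorE:
  assumes c: "is_cokernel C c f" and g: "g \<in> Ar C" "cdom C g = ccod C f"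
    and gf: "g \<cdot> f = czero C (cdom C f) (ccod C g)"
  obtains u where "u \<in> Ar C" "cdom C u = ccod C c" "ccod C u = ccod C g" "u \<cdot> c = g"
proof -
  have "g \<in> hom C (ccod C f) (ccod C g)" using g by (simp add: hom_def)
  from cokernel_factor[OF c this gf] show ?thesis using that by (auto simp: hom_def)
qed

lemma mono_cancel:
  assumes "mono C k" "g \<in> Ar C" "h \<in> Ar C" "ccod C g = cdom C k" "ccod C h = cdom C k"
    "cdom C g = cdom C h" "k \<cdot> g = k \<cdot> h"
  shows "g = h"
  using monoD[OF assms(1), of g "cdom C g" h] assms by (simp add: hom_def)

lemma epi_cancel:
  assumes "epi C k" "g \<in> Ar C" "h \<in> Ar C" "cdom C g = ccod C k" "cdom C h = ccod C k"
    "ccod C g = ccod C h" "g \<cdot> k = h \<cdot> k"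
  shows "g = h"
  using epiD[OF assms(1), of g "ccod C g" h] assms by (simp add: hom_def)

lemma kernel_exists: "f \<in> Ar C \<Longrightarrow> \<exists>k. is_kernel C k f"
  using abelian unfolding abelian_def by blast

lemma epi_is_cokernel: "epi C f \<Longrightarrow> \<exists>g. is_cokernel C f g"
  using abelian unfolding abelian_def by blast

lemma biproduct_exists:
  "A \<in> Ob C \<Longrightarrow> B \<in> Ob C \<Longrightarrow> \<exists>P i1 i2 p1 p2. is_biproduct C A B P i1 i2 p1 p2"
  using abelian unfolding abelian_def by blast

lemma cokernel_of_kernel:
  assumes e: "is_cokernel C e g" and k: "is_kernel C k e"
  shows "is_cokernel C e k"
proof -
  note ed = cokernel_arrD[OF e] and kd = kernel_arrD[OF k]
  have "\<exists>!u. u \<in> hom C (ccod C e) T \<and> u \<cdot> e = h"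
    if h: "h \<in> hom C (ccod C k) T" and hk: "h \<cdot> k = czero C (cdom C k) T" for T h
  proof -
    obtain v where v: "v \<in> Ar C" "cdom C v = cdom C g" "ccod C v = cdom C k" "k \<cdot> v = g"
      using kernel_factorE[OF k] ed by metis
    have T: "T \<in> Ob C" using h in_hom_Ob by blast
    have "h \<cdot> g = (h \<cdot> k) \<cdot> v" using v kd h by (simp add: hom_def comp_simps)
    also have "\<dots> = czero C (cdom C g) T" using hk v T by (simp add: comp_simps)
    finally show ?thesis using cokernel_factor[OF e] h kd ed by simp
  qed
  then show ?thesis unfolding is_cokernel_def using ed kd by auto
qed

lemma cokernels_iso:
  assumes c: "is_cokernel C c f" and c': "is_cokernel C c' f"
  shows "iso_obj C (ccod C c) (ccod C c')"
proof -
  note cd = cokernel_arrD[OF c] and cd' = cokernel_arrD[OF c']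
  obtain u where u: "u \<in> Ar C" "cdom C u = ccod C c" "ccod C u = ccod C c'" "u \<cdot> c = c'"
    using cokernel_factorE[OF c] cd' by metis
  obtain v where v: "v \<in> Ar C" "cdom C v = ccod C c'" "ccod C v = ccod C c" "v \<cdot> c' = c"
    using cokernel_factorE[OF c'] cd by metis
  have "(v \<cdot> u) \<cdot> c = cid C (ccod C c) \<cdot> c" using u v cd by (simp add: comp_simps)
  then have vu: "v \<cdot> u = cid C (ccod C c)"
    using epi_cancel[OF cokernel_epi[OF c]] u v cd by (simp add: comp_simps)
  have "(u \<cdot> v) \<cdot> c' = cid C (ccod C c') \<cdot> c'" using u v cd' by (simp add: comp_simps)
  then have uv: "u \<cdot> v = cid C (ccod C c')"
    using epi_cancel[OF cokernel_epi[OF c']] u v cd' by (simp add: comp_simps)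
  show ?thesis unfolding iso_obj_def using u v uv vu by (auto simp: hom_def)
qed


lemma epiI_zero_cancel:
  assumes r: "r \<in> Ar C"
    and zero_cancel: "\<And>h. h \<in> Ar C \<Longrightarrow> cdom C h = ccod C r \<Longrightarrow>
      h \<cdot> r = czero C (cdom C r) (ccod C h) \<Longrightarrow> h = czero C (ccod C r) (ccod C h)"
  shows "epi C r"
  unfolding epi_def
proof (intro conjI ballI impI)
  fix T g h assume g: "g \<in> hom C (ccod C r) T" and h: "h \<in> hom C (ccod C r) T"
    and eq: "g \<cdot> r = h \<cdot> r"
  have r': "r \<in> hom C (cdom C r) (ccod C r)" using r by (simp add: hom_def)
  define d where "d = g \<oplus> cneg C h"
  have d: "d \<in> hom C (ccod C r) T" unfolding d_def using add_in_hom neg_in_hom g h by blast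
  have "d \<cdot> r = (g \<cdot> r) \<oplus> (cneg C h \<cdot> r)"
    unfolding d_def using comp_add_distrib_right[OF r' g neg_in_hom[OF h]] .
  also have "\<dots> = (g \<cdot> r) \<oplus> cneg C (g \<cdot> r)" using neg_comp[OF h r'] eq by simp
  also have "\<dots> = czero C (cdom C r) T" using hom_add_neg comp_in_hom[OF r' g] by blast
  finally have "d = czero C (ccod C r) T" using zero_cancel[of d] d by (simp add: hom_def)
  then show "g = h" using hom_eq_if_diff_zero g h unfolding d_def by blast
qed (rule r)

lemma epi_comp:
  assumes p: "epi C p" and q: "epi C q" and pq: "ccod C p = cdom C q"
  shows "epi C (q \<cdot> p)"
proof -
  have pa: "p \<in> Ar C" and qa: "q \<in> Ar C" using p q unfolding epi_def by auto
  show ?thesis unfolding epi_def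
  proof (intro conjI ballI impI)
    show "q \<cdot> p \<in> Ar C" using pa qa pq by (simp add: comp_simps)
    fix T g h assume g: "g \<in> hom C (ccod C (q \<cdot> p)) T" and h: "h \<in> hom C (ccod C (q \<cdot> p)) T"
      and eq: "g \<cdot> (q \<cdot> p) = h \<cdot> (q \<cdot> p)"
    have g': "g \<in> Ar C" "cdom C g = ccod C q" "ccod C g = T"
      and h': "h \<in> Ar C" "cdom C h = ccod C q" "ccod C h = T"
      using g h pa qa pq by (auto simp: hom_def comp_simps)
    have "(g \<cdot> q) \<cdot> p = (h \<cdot> q) \<cdot> p" using eq g' h' pa qa pq by (simp add: comp_simps)
    then have "g \<cdot> q = h \<cdot> q"
      using epi_cancel[OF p, of "g \<cdot> q" "h \<cdot> q"] g' h' pa qa pq by (simp add: comp_simps)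
    then show "g = h" using epi_cancel[OF q, of g h] g' h' by simp
  qed
qed

lemma id_cokernel_of_zero_dom:
  assumes Z: "zero_obj C Z" and f: "f \<in> Ar C" "cdom C f = Z"
  shows "is_cokernel C (cid C (ccod C f)) f"
proof -
  have f0: "f = czero C Z (ccod C f)" using zero_obj_hom_from[OF Z] f by (simp add: hom_def)
  show ?thesis unfolding is_cokernel_def
  proof (intro conjI ballI impI)
    show "cid C (ccod C f) \<cdot> f = czero C (cdom C f) (ccod C (cid C (ccod C f)))"
      using f f0 by (simp add: comp_simps)
    fix T g assume g: "g \<in> hom C (ccod C f) T"
    show "\<exists>!u. u \<in> hom C (ccod C (cid C (ccod C f))) T \<and> u \<cdot> cid C (ccod C f) = g"
    proof (rule ex1I[of _ g])
      fix u assume "u \<in> hom C (ccod C (cid C (ccod C f))) T \<and> u \<cdot> cid C (ccod C f) = g"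
      then show "u = g" using f by (elim conjE) (simp add: hom_def comp_simps)
    qed (use f g in \<open>simp add: hom_def comp_simps\<close>)
  qed (use f in \<open>auto simp: comp_simps\<close>)
qed

lemma zero_kernel_of_id:
  assumes Z: "zero_obj C Z" and B: "B \<in> Ob C"
  shows "is_kernel C (czero C Z B) (cid C B)"
proof -
  have Z': "Z \<in> Ob C" using Z zero_obj_Ob by blast
  show ?thesis unfolding is_kernel_def
  proof (intro conjI ballI impI)
    fix T g assume T: "T \<in> Ob C" and g: "g \<in> hom C T (cdom C (cid C B))"
      and zero: "cid C B \<cdot> g = czero C T (ccod C (cid C B))"
    have g0: "g = czero C T B" using zero g B by (simp add: hom_def comp_simps)
    show "\<exists>!u. u \<in> hom C T (cdom C (czero C Z B)) \<and> czero C Z B \<cdot> u = g"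
    proof (rule ex1I[of _ "czero C T Z"])
      fix u assume "u \<in> hom C T (cdom C (czero C Z B)) \<and> czero C Z B \<cdot> u = g"
      then show "u = czero C T Z" using zero_obj_hom_to[OF Z, of u T] Z' B by (simp add: comp_simps)
    qed (use g0 T Z' B in \<open>simp add: hom_def comp_simps\<close>)
  qed (use Z' B in \<open>auto simp: comp_simps\<close>)
qed


lemma kernel_comp_iso:
  assumes k: "is_kernel C i p" and f: "f \<in> hom C (ccod C i) Y" and g: "g \<in> hom C Y (ccod C i)"
    and fg: "f \<cdot> g = cid C Y" and gf: "g \<cdot> f = cid C (ccod C i)"
  shows "is_kernel C (f \<cdot> i) (p \<cdot> g)"
proof -
  note kd = kernel_arrD[OF k]
  have f': "f \<in> Ar C" "cdom C f = ccod C i" "ccod C f = Y"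
    and g': "g \<in> Ar C" "cdom C g = Y" "ccod C g = ccod C i" using f g by (auto simp: hom_def)
  have ar: "f \<cdot> i \<in> Ar C" "p \<cdot> g \<in> Ar C" "cdom C (f \<cdot> i) = cdom C i" "ccod C (f \<cdot> i) = Y"
    "cdom C (p \<cdot> g) = Y" "ccod C (p \<cdot> g) = ccod C p" using kd f' g' by (auto simp: comp_simps)
  have "(p \<cdot> g) \<cdot> (f \<cdot> i) = p \<cdot> ((g \<cdot> f) \<cdot> i)" using kd f' g' by (simp add: comp_simps)
  then have zero: "(p \<cdot> g) \<cdot> (f \<cdot> i) = czero C (cdom C i) (ccod C p)"
    using kd gf by (simp add: comp_simps)
  have "\<exists>!u. u \<in> hom C T (cdom C (f \<cdot> i)) \<and> (f \<cdot> i) \<cdot> u = h"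
    if h: "h \<in> hom C T (cdom C (p \<cdot> g))" and T: "T \<in> Ob C"
      and hz: "(p \<cdot> g) \<cdot> h = czero C T (ccod C (p \<cdot> g))" for T h
  proof -
    have h': "h \<in> Ar C" "cdom C h = T" "ccod C h = Y" using h ar by (auto simp: hom_def)
    have "p \<cdot> (g \<cdot> h) = czero C (cdom C (g \<cdot> h)) (ccod C p)" using hz h' kd f' g' by (simp add: comp_simps)
    then obtain u where u: "u \<in> Ar C" "cdom C u = T" "ccod C u = cdom C i" "i \<cdot> u = g \<cdot> h"
      using kernel_factorE[OF k, of "g \<cdot> h"] h' kd g' by (simp add: comp_simps) metis
    show ?thesis
    proof (rule ex1I[of _ u])
      have "(f \<cdot> i) \<cdot> u = (f \<cdot> g) \<cdot> h" using u kd f' g' h' by (simp add: comp_simps)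
      then show "u \<in> hom C T (cdom C (f \<cdot> i)) \<and> (f \<cdot> i) \<cdot> u = h"
        using u ar fg h' by (simp add: hom_def comp_simps)
      fix v assume v: "v \<in> hom C T (cdom C (f \<cdot> i)) \<and> (f \<cdot> i) \<cdot> v = h"
      have v': "v \<in> Ar C" "cdom C v = T" "ccod C v = cdom C i" using v ar by (auto simp: hom_def)
      have "i \<cdot> v = (g \<cdot> f) \<cdot> (i \<cdot> v)" using v' kd gf by (simp add: comp_simps)
      also have "\<dots> = i \<cdot> u" using v u v' kd f' g' by (simp add: comp_simps)
      finally show "v = u" using mono_cancel[OF kernel_mono[OF k], of v u] u v' by simp
    qed
  qed
  then show ?thesis unfolding is_kernel_def using ar zero by auto
qed

lemma cokernel_comp_iso:
  assumes c: "is_cokernel C p i" and f: "f \<in> hom C (ccod C i) Y" and g: "g \<in> hom C Y (ccod C i)"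
    and fg: "f \<cdot> g = cid C Y" and gf: "g \<cdot> f = cid C (ccod C i)"
  shows "is_cokernel C (p \<cdot> g) (f \<cdot> i)"
proof -
  note cd = cokernel_arrD[OF c]
  have f': "f \<in> Ar C" "cdom C f = ccod C i" "ccod C f = Y"
    and g': "g \<in> Ar C" "cdom C g = Y" "ccod C g = ccod C i" using f g by (auto simp: hom_def)
  have ar: "f \<cdot> i \<in> Ar C" "p \<cdot> g \<in> Ar C" "cdom C (f \<cdot> i) = cdom C i" "ccod C (f \<cdot> i) = Y"
    "cdom C (p \<cdot> g) = Y" "ccod C (p \<cdot> g) = ccod C p" using cd f' g' by (auto simp: comp_simps)
  have "(p \<cdot> g) \<cdot> (f \<cdot> i) = p \<cdot> ((g \<cdot> f) \<cdot> i)" using cd f' g' by (simp add: comp_simps)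
  then have zero: "(p \<cdot> g) \<cdot> (f \<cdot> i) = czero C (cdom C i) (ccod C p)"
    using cd gf by (simp add: comp_simps)
  have "\<exists>!u. u \<in> hom C (ccod C (p \<cdot> g)) T \<and> u \<cdot> (p \<cdot> g) = h"
    if h: "h \<in> hom C (ccod C (f \<cdot> i)) T" and T: "T \<in> Ob C"
      and hz: "h \<cdot> (f \<cdot> i) = czero C (cdom C (f \<cdot> i)) T" for T h
  proof -
    have h': "h \<in> Ar C" "cdom C h = Y" "ccod C h = T" using h ar by (auto simp: hom_def)
    have "(h \<cdot> f) \<cdot> i = czero C (cdom C i) (ccod C (h \<cdot> f))" using hz h' cd f' by (simp add: comp_simps)
    then obtain u where u: "u \<in> Ar C" "cdom C u = ccod C p" "ccod C u = T" "u \<cdot> p = h \<cdot> f"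
      using cokernel_factorE[OF c, of "h \<cdot> f"] h' cd f' by (simp add: comp_simps) metis
    show ?thesis
    proof (rule ex1I[of _ u])
      have "u \<cdot> (p \<cdot> g) = (u \<cdot> p) \<cdot> g" using comp_assoc_arr[of g p u] u cd g' by simp
      also have "\<dots> = h \<cdot> (f \<cdot> g)" using u f' g' h' by (simp add: comp_simps)
      finally have "u \<cdot> (p \<cdot> g) = h \<cdot> (f \<cdot> g)" .
      then show "u \<in> hom C (ccod C (p \<cdot> g)) T \<and> u \<cdot> (p \<cdot> g) = h"
        using u ar fg h' by (simp add: hom_def comp_simps)
      fix v assume v: "v \<in> hom C (ccod C (p \<cdot> g)) T \<and> v \<cdot> (p \<cdot> g) = h"
      have v': "v \<in> Ar C" "cdom C v = ccod C p" "ccod C v = T" using v ar by (auto simp: hom_def)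
      have "v \<cdot> p = (v \<cdot> p) \<cdot> (g \<cdot> f)" using v' cd gf by (simp add: comp_simps)
      also have "\<dots> = (v \<cdot> (p \<cdot> g)) \<cdot> f" using v' cd f' g' by (simp add: comp_simps)
      also have "\<dots> = u \<cdot> p" using v u by simp
      finally show "v = u" using epi_cancel[OF cokernel_epi[OF c], of v u] u v' by simp
    qed
  qed
  then show ?thesis unfolding is_cokernel_def using ar zero by auto
qed


lemma biproduct_arrD:
  assumes "is_biproduct C A B P i1 i2 p1 p2"
  shows "i1 \<in> Ar C" "cdom C i1 = A" "ccod C i1 = P" "i2 \<in> Ar C" "cdom C i2 = B" "ccod C i2 = P"
    "p1 \<in> Ar C" "cdom C p1 = P" "ccod C p1 = A" "p2 \<in> Ar C" "cdom C p2 = P" "ccod C p2 = B"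
    "p1 \<cdot> i1 = cid C A" "p2 \<cdot> i2 = cid C B" "p1 \<cdot> i2 = czero C B A" "p2 \<cdot> i1 = czero C A B"
    "(i1 \<cdot> p1) \<oplus> (i2 \<cdot> p2) = cid C P"
  using assms unfolding is_biproduct_def hom_def by auto

lemma biproduct_kernel:
  assumes b: "is_biproduct C A B P i1 i2 p1 p2"
  shows "is_kernel C i1 p2"
proof -
  note a = biproduct_arrD[OF b]
  have Ob: "A \<in> Ob C" "B \<in> Ob C" "P \<in> Ob C" using a by (auto simp: comp_simps)
  have ip: "i1 \<cdot> p1 \<in> hom C P P" "i2 \<cdot> p2 \<in> hom C P P" using a by (auto simp: hom_def comp_simps)
  have "\<exists>!u. u \<in> hom C T (cdom C i1) \<and> i1 \<cdot> u = t"
    if t: "t \<in> hom C T (cdom C p2)" and T: "T \<in> Ob C" and zero: "p2 \<cdot> t = czero C T (ccod C p2)"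
    for T t
  proof -
    have t': "t \<in> Ar C" "cdom C t = T" "ccod C t = P" using t a by (auto simp: hom_def)
    have "t = ((i1 \<cdot> p1) \<oplus> (i2 \<cdot> p2)) \<cdot> t" using a(17) t' by (simp add: comp_simps)
    also have "\<dots> = ((i1 \<cdot> p1) \<cdot> t) \<oplus> ((i2 \<cdot> p2) \<cdot> t)"
      using comp_add_distrib_right[OF _ ip] t a by simp
    also have "\<dots> = (i1 \<cdot> (p1 \<cdot> t)) \<oplus> czero C T P" using a t' zero Ob T by (simp add: comp_simps)
    also have "\<dots> = i1 \<cdot> (p1 \<cdot> t)"
      using hom_add_zero_right[of "i1 \<cdot> (p1 \<cdot> t)" T P] a t' by (simp add: hom_def comp_simps)
    finally have t_factor: "t = i1 \<cdot> (p1 \<cdot> t)" .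
    show ?thesis
    proof (rule ex1I[of _ "p1 \<cdot> t"])
      fix u assume u: "u \<in> hom C T (cdom C i1) \<and> i1 \<cdot> u = t"
      then have "u = (p1 \<cdot> i1) \<cdot> u" using a Ob by (simp add: hom_def comp_simps)
      then show "u = p1 \<cdot> t" using u a comp_assoc_arr[of u i1 p1] by (simp add: hom_def)
    qed (use t_factor a t' in \<open>simp add: hom_def comp_simps\<close>)
  qed
  then show ?thesis unfolding is_kernel_def using a Ob by (auto simp: comp_simps)
qed

lemma biproduct_cokernel:
  assumes b: "is_biproduct C A B P i1 i2 p1 p2"
  shows "is_cokernel C p2 i1"
proof -
  note a = biproduct_arrD[OF b]
  have Ob: "A \<in> Ob C" "B \<in> Ob C" "P \<in> Ob C" using a by (auto simp: comp_simps)
  have ip: "i1 \<cdot> p1 \<in> hom C P P" "i2 \<cdot> p2 \<in> hom C P P" using a by (auto simp: hom_def comp_simps)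
  have "\<exists>!u. u \<in> hom C (ccod C p2) T \<and> u \<cdot> p2 = g"
    if g: "g \<in> hom C (ccod C i1) T" and T: "T \<in> Ob C" and zero: "g \<cdot> i1 = czero C (cdom C i1) T"
    for T g
  proof -
    have g': "g \<in> Ar C" "cdom C g = P" "ccod C g = T" using g a by (auto simp: hom_def)
    have "g = g \<cdot> ((i1 \<cdot> p1) \<oplus> (i2 \<cdot> p2))" using a(17) g' by (simp add: comp_simps)
    also have "\<dots> = (g \<cdot> (i1 \<cdot> p1)) \<oplus> (g \<cdot> (i2 \<cdot> p2))"
      using comp_add_distrib_left[OF ip] g a by simp
    also have "\<dots> = czero C P T \<oplus> ((g \<cdot> i2) \<cdot> p2)"
      using a g' zero T by (simp flip: comp_assoc_arr add: comp_zero_left_arr)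
    also have "\<dots> = (g \<cdot> i2) \<cdot> p2"
      using hom_add_zero_left[of "(g \<cdot> i2) \<cdot> p2" P T] a g' by (simp add: hom_def comp_simps)
    finally have g_factor: "g = (g \<cdot> i2) \<cdot> p2" .
    show ?thesis
    proof (rule ex1I[of _ "g \<cdot> i2"])
      fix u assume u: "u \<in> hom C (ccod C p2) T \<and> u \<cdot> p2 = g"
      then have "u = u \<cdot> (p2 \<cdot> i2)" using a Ob by (simp add: hom_def comp_simps)
      then show "u = g \<cdot> i2" using u a comp_assoc_arr[of i2 p2 u] by (simp add: hom_def)
    qed (use g_factor a g' in \<open>simp add: hom_def comp_simps\<close>)
  qed
  then show ?thesis unfolding is_cokernel_def using a Ob by (auto simp: comp_simps)
qed


lemma kernel_comp_pullback:
  assumes j: "is_kernel C j q" and k: "is_kernel C k (q \<cdot> p)"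
    and p: "p \<in> Ar C" "ccod C p = ccod C j"
    and r: "r \<in> Ar C" "cdom C r = cdom C k" "ccod C r = cdom C j" "j \<cdot> r = p \<cdot> k"
    and a: "a \<in> Ar C" "ccod C a = cdom C p" and b: "b \<in> Ar C" "ccod C b = cdom C j"
    and ab: "cdom C a = cdom C b" "p \<cdot> a = j \<cdot> b"
  shows "\<exists>v. v \<in> Ar C \<and> cdom C v = cdom C b \<and> ccod C v = cdom C r \<and> r \<cdot> v = b"
proof -
  note jd = kernel_arrD[OF j] and kd = kernel_arrD[OF k]
  have qp: "q \<cdot> p \<in> Ar C" "cdom C (q \<cdot> p) = cdom C p" "ccod C (q \<cdot> p) = ccod C q"
    using jd p by (auto simp: comp_simps)
  have "(q \<cdot> p) \<cdot> a = q \<cdot> (j \<cdot> b)" using ab a b p jd by (simp add: comp_simps)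
  also have "\<dots> = (q \<cdot> j) \<cdot> b" using comp_assoc_arr[of b j q] jd b by simp
  also have "\<dots> = czero C (cdom C a) (ccod C (q \<cdot> p))"
    using jd b ab qp by (simp add: comp_simps del: comp_assoc_arr)
  finally obtain v where v: "v \<in> Ar C" "cdom C v = cdom C a" "ccod C v = cdom C k" "k \<cdot> v = a"
    using kernel_factorE[OF k, of a] a qp by metis
  have "ccod C k = cdom C p" using kd qp by simp
  then have "j \<cdot> (r \<cdot> v) = p \<cdot> (k \<cdot> v)"
    using comp_assoc_arr[of v r j] comp_assoc_arr[of v k p] r v kd p jd by simp
  also have "\<dots> = j \<cdot> b" using v ab by simp
  finally have "r \<cdot> v = b"
    using mono_cancel[OF kernel_mono[OF j], of "r \<cdot> v" b] r v b ab by (simp add: comp_simps)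
  then show ?thesis using v r ab by auto
qed


lemma epi_of_comp_epi:
  assumes e: "epi C (f \<cdot> g)" and f: "f \<in> Ar C" and g: "g \<in> Ar C" "ccod C g = cdom C f"
  shows "epi C f"
  unfolding epi_def
proof (intro conjI ballI impI)
  fix T u w assume u: "u \<in> hom C (ccod C f) T" and w: "w \<in> hom C (ccod C f) T"
    and eq: "u \<cdot> f = w \<cdot> f"
  have "u \<cdot> (f \<cdot> g) = w \<cdot> (f \<cdot> g)"
    using eq u w f g comp_assoc_arr[of g f u] comp_assoc_arr[of g f w] by (simp add: hom_def)
  then show "u = w" using epiD[OF e] u w f g by (simp add: comp_simps)
qed (rule f)

lemma epi_cokernel_of_kernel: "epi C e \<Longrightarrow> is_kernel C k e \<Longrightarrow> is_cokernel C e k"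
  using epi_is_cokernel cokernel_of_kernel by blast

lemma biproduct_difference_map:
  assumes b: "is_biproduct C (cdom C p) (cdom C j) P i1 i2 p1 p2"
    and p: "p \<in> Ar C" and j: "j \<in> Ar C" "ccod C j = ccod C p"
  defines "\<phi> \<equiv> (p \<cdot> p1) \<oplus> cneg C (j \<cdot> p2)"
  shows "\<phi> \<in> hom C P (ccod C p)" and "\<phi> \<cdot> i1 = p"
    and "x \<in> hom C X P \<Longrightarrow> \<phi> \<cdot> x = czero C X (ccod C p) \<Longrightarrow> p \<cdot> (p1 \<cdot> x) = j \<cdot> (p2 \<cdot> x)"
proof -
  note a = biproduct_arrD[OF b]
  have pp1: "p \<cdot> p1 \<in> hom C P (ccod C p)" and jp2: "j \<cdot> p2 \<in> hom C P (ccod C p)"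
    using a p j by (auto simp: hom_def comp_simps)
  show "\<phi> \<in> hom C P (ccod C p)" using add_in_hom[OF pp1 neg_in_hom[OF jp2]] unfolding \<phi>_def .
  have comp_phi: "\<phi> \<cdot> x = ((p \<cdot> p1) \<cdot> x) \<oplus> cneg C ((j \<cdot> p2) \<cdot> x)" if x: "x \<in> hom C X P" for x X
    unfolding \<phi>_def using comp_add_distrib_right[OF x pp1 neg_in_hom[OF jp2]] neg_comp[OF jp2 x]
    by simp
  have "\<phi> \<cdot> i1 = p \<oplus> cneg C (czero C (cdom C p) (ccod C p))"
    using comp_phi[of i1] a p j by (simp add: hom_def comp_simps)
  then show "\<phi> \<cdot> i1 = p"
    using neg_zero hom_add_zero_right[OF in_homI[OF p]] p by (simp add: comp_simps)
  assume x: "x \<in> hom C X P" and zero: "\<phi> \<cdot> x = czero C X (ccod C p)"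
  then have "(p \<cdot> p1) \<cdot> x = (j \<cdot> p2) \<cdot> x"
    using comp_phi hom_eq_if_diff_zero comp_in_hom[OF x pp1] comp_in_hom[OF x jp2] by metis
  then show "p \<cdot> (p1 \<cdot> x) = j \<cdot> (p2 \<cdot> x)" using x a p j by (simp add: hom_def comp_simps)
qed

lemma pullback_epi:
  assumes p: "epi C p" and j: "j \<in> Ar C" "ccod C j = ccod C p"
    and r: "r \<in> Ar C" "ccod C r = cdom C j"
    and pb: "\<And>a b. a \<in> Ar C \<Longrightarrow> ccod C a = cdom C p \<Longrightarrow> b \<in> Ar C \<Longrightarrow> ccod C b = cdom C j \<Longrightarrow>
      cdom C a = cdom C b \<Longrightarrow> p \<cdot> a = j \<cdot> b \<Longrightarrow>
      \<exists>v. v \<in> Ar C \<and> cdom C v = cdom C b \<and> ccod C v = cdom C r \<and> r \<cdot> v = b"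
  shows "epi C r"
proof -
  have p': "p \<in> Ar C" using p unfolding epi_def by blast
  obtain P i1 i2 p1 p2 where b: "is_biproduct C (cdom C p) (cdom C j) P i1 i2 p1 p2"
    using biproduct_exists[of "cdom C p" "cdom C j"] p' j by (auto simp: comp_simps)
  note a = biproduct_arrD[OF b]
  define \<phi> where "\<phi> = (p \<cdot> p1) \<oplus> cneg C (j \<cdot> p2)"
  note diff = biproduct_difference_map[OF b p' j, folded \<phi>_def]
  have phi: "\<phi> \<in> Ar C" "cdom C \<phi> = P" "ccod C \<phi> = ccod C p" using diff(1) by (auto simp: hom_def)
  have epi_phi: "epi C \<phi>" using epi_of_comp_epi[of \<phi> i1] diff(2) p phi a by simp
  obtain m where m: "is_kernel C m \<phi>" using kernel_exists phi by blast
  note md = kernel_arrD[OF m]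
  have phi_coker: "is_cokernel C \<phi> m" using epi_cokernel_of_kernel[OF epi_phi m] .
  have m': "m \<in> hom C (cdom C m) P" using md phi by (simp add: hom_def)
  show ?thesis
  proof (rule epiI_zero_cancel[OF r(1)])
    fix h assume h: "h \<in> Ar C" "cdom C h = ccod C r" and hr: "h \<cdot> r = czero C (cdom C r) (ccod C h)"
    have T: "ccod C h \<in> Ob C" using h by (simp add: comp_simps)
    have "p \<cdot> (p1 \<cdot> m) = j \<cdot> (p2 \<cdot> m)" using diff(3)[OF m'] md phi by simp
    then obtain v where v: "v \<in> Ar C" "cdom C v = cdom C m" "ccod C v = cdom C r" "r \<cdot> v = p2 \<cdot> m"
      using pb[of "p1 \<cdot> m" "p2 \<cdot> m"] a md phi p' j by (auto simp: comp_simps)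
    have "(h \<cdot> p2) \<cdot> m = (h \<cdot> r) \<cdot> v" using v h r a md phi by (simp add: comp_simps)
    also have "\<dots> = czero C (cdom C m) (ccod C (h \<cdot> p2))" using hr h r v a T by (simp add: comp_simps)
    finally obtain w where w: "w \<in> Ar C" "cdom C w = ccod C p" "ccod C w = ccod C h" "w \<cdot> \<phi> = h \<cdot> p2"
      using cokernel_factorE[OF phi_coker, of "h \<cdot> p2"] h a md phi r by (simp add: comp_simps) metis
    have "w \<cdot> p = (w \<cdot> \<phi>) \<cdot> i1" using diff(2) comp_assoc_arr[of i1 \<phi> w] w phi a by simp
    also have "\<dots> = czero C (cdom C p) (ccod C h)" using w h a r T p' by (simp add: comp_simps)
    also have "\<dots> = czero C (ccod C p) (ccod C h) \<cdot> p" using p' T by (simp add: comp_simps)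
    finally have w0: "w = czero C (ccod C p) (ccod C h)"
      using epi_cancel[OF p, of w "czero C (ccod C p) (ccod C h)"] w p' T by (simp add: comp_simps)
    have "h = (h \<cdot> p2) \<cdot> i2" using h a r by (simp add: comp_simps)
    also have "\<dots> = (w \<cdot> \<phi>) \<cdot> i2" using w by simp
    also have "\<dots> = czero C (ccod C r) (ccod C h)" using w0 phi a r p' T by (simp add: comp_simps)
    finally show "h = czero C (ccod C r) (ccod C h)" .
  qed
qed


lemma kernel_of_pullback_leg:
  assumes i: "is_kernel C i p" and k: "is_kernel C k f" and j: "mono C j" "j \<in> Ar C"
    and jp: "ccod C j = ccod C p"
    and r: "r \<in> Ar C" "cdom C r = cdom C k" "ccod C r = cdom C j" "j \<cdot> r = p \<cdot> k"
    and s: "s \<in> Ar C" "cdom C s = cdom C i" "ccod C s = cdom C k" "k \<cdot> s = i"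
  shows "is_kernel C s r"
proof -
  note id = kernel_arrD[OF i] and kd = kernel_arrD[OF k]
  have kp: "ccod C k = cdom C p" using s kd id by (metis cod_comp)
  have Ob: "cdom C i \<in> Ob C" "cdom C k \<in> Ob C" "ccod C p \<in> Ob C" using id kd by (auto simp: comp_simps)
  have "j \<cdot> (r \<cdot> s) = p \<cdot> (k \<cdot> s)"
    using comp_assoc_arr[of s r j] comp_assoc_arr[of s k p] r s j kd kp id by simp
  also have "\<dots> = j \<cdot> czero C (cdom C s) (ccod C r)" using s id r j jp Ob by (simp add: comp_simps)
  finally have rs: "r \<cdot> s = czero C (cdom C s) (ccod C r)"
    using mono_cancel[OF j(1), of "r \<cdot> s" "czero C (cdom C s) (ccod C r)"] r s j Ob
    by (simp add: comp_simps)
  have "\<exists>!u. u \<in> hom C T (cdom C s) \<and> s \<cdot> u = t"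
    if t: "t \<in> hom C T (cdom C r)" and T: "T \<in> Ob C" and zero: "r \<cdot> t = czero C T (ccod C r)" for T t
  proof -
    have t': "t \<in> Ar C" "cdom C t = T" "ccod C t = cdom C k" using t r by (auto simp: hom_def)
    have "p \<cdot> (k \<cdot> t) = j \<cdot> (r \<cdot> t)"
      using comp_assoc_arr[of t k p] comp_assoc_arr[of t r j] t' r j kd kp id by simp
    also have "\<dots> = czero C (cdom C (k \<cdot> t)) (ccod C p)" using zero t' r j jp kd T by (simp add: comp_simps)
    finally obtain u where u: "u \<in> Ar C" "cdom C u = T" "ccod C u = cdom C i" "i \<cdot> u = k \<cdot> t"
      using kernel_factorE[OF i, of "k \<cdot> t"] t' kd kp by (simp add: comp_simps) metis
    show ?thesis
    proof (rule ex1I[of _ u])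
      have "k \<cdot> (s \<cdot> u) = k \<cdot> t" using u s kd by (simp flip: comp_assoc_arr)
      then have "s \<cdot> u = t" using mono_cancel[OF kernel_mono[OF k], of "s \<cdot> u" t] u s t' by (simp add: comp_simps)
      then show "u \<in> hom C T (cdom C s) \<and> s \<cdot> u = t" using u s by (simp add: hom_def)
      fix v assume v: "v \<in> hom C T (cdom C s) \<and> s \<cdot> v = t"
      have v': "v \<in> Ar C" "cdom C v = T" "ccod C v = cdom C i" using v s by (auto simp: hom_def)
      have "i \<cdot> v = k \<cdot> (s \<cdot> v)" using v' s kd by (simp flip: comp_assoc_arr)
      also have "\<dots> = i \<cdot> u" using v u by simp
      finally show "v = u" using mono_cancel[OF kernel_mono[OF i], of v u] u v' by simp
    qed
  qed
  then show ?thesis unfolding is_kernel_def using s r rs by auto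
qed

lemma iso_mor_iso_obj: "iso_mor C i \<Longrightarrow> iso_obj C (cdom C i) (ccod C i)"
  unfolding iso_mor_def iso_obj_def by (auto simp: hom_def)

lemma iso_mor_cancel_iso_left:
  assumes i: "i \<in> Ar C" and f: "f \<in> hom C (ccod C i) Y" and g: "g \<in> hom C Y (ccod C i)"
    and gf: "g \<cdot> f = cid C (ccod C i)" and fg: "f \<cdot> g = cid C Y" and fi: "iso_mor C (f \<cdot> i)"
  shows "iso_mor C i"
proof -
  have f': "f \<in> Ar C" "cdom C f = ccod C i" "ccod C f = Y"
    and g': "g \<in> Ar C" "cdom C g = Y" "ccod C g = ccod C i" using f g by (auto simp: hom_def)
  have "f \<cdot> i \<in> Ar C" "cdom C (f \<cdot> i) = cdom C i" "ccod C (f \<cdot> i) = Y" using i f' by (auto simp: comp_simps)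
  then obtain h where h: "h \<in> Ar C" "cdom C h = Y" "ccod C h = cdom C i"
    and hfi: "h \<cdot> (f \<cdot> i) = cid C (cdom C i)" and fih: "(f \<cdot> i) \<cdot> h = cid C Y"
    using fi unfolding iso_mor_def by (auto simp: hom_def)
  have left: "(h \<cdot> f) \<cdot> i = cid C (cdom C i)" using hfi h f' i by (simp add: comp_simps)
  have "i \<cdot> (h \<cdot> f) = (g \<cdot> f) \<cdot> (i \<cdot> (h \<cdot> f))" using gf i h f' by (simp add: comp_simps)
  also have "\<dots> = g \<cdot> (((f \<cdot> i) \<cdot> h) \<cdot> f)" using i f' g' h by (simp add: comp_simps)
  also have "\<dots> = cid C (ccod C i)" using fih gf f' g' by (simp add: comp_simps)
  finally have right: "i \<cdot> (h \<cdot> f) = cid C (ccod C i)" .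
  have "h \<cdot> f \<in> hom C (ccod C i) (cdom C i)" using h f' i by (simp add: hom_def comp_simps)
  then show ?thesis unfolding iso_mor_def using left right i by blast
qed

lemma epi_from_zero_obj:
  assumes Z: "zero_obj C B" and e: "epi C p" and d: "cdom C p = B"
  shows "zero_obj C (ccod C p)"
proof -
  have p: "p \<in> Ar C" using e unfolding epi_def by blast
  have W: "ccod C p \<in> Ob C" using p by (simp add: comp_simps)
  have "cid C (ccod C p) \<cdot> p \<in> hom C B (ccod C p)" "czero C (ccod C p) (ccod C p) \<cdot> p \<in> hom C B (ccod C p)"
    using p d W zero_obj_Ob[OF Z] by (simp_all add: hom_def comp_simps)
  then have "cid C (ccod C p) \<cdot> p = czero C (ccod C p) (ccod C p) \<cdot> p"
    using zero_obj_hom_from[OF Z] by metis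
  then have "cid C (ccod C p) = czero C (ccod C p) (ccod C p)"
    using epi_cancel[OF e, of "cid C (ccod C p)" "czero C (ccod C p) (ccod C p)"] W by (simp add: comp_simps)
  then show ?thesis using zero_objI W by blast
qed

end

section \<open>Exact categories\<close>

locale exact_category = abelian_category C for C :: "('o,'m) acat" +
  fixes E :: "'o set"
  assumes exact: "exact_cat C E"
begin

lemma E_Ob: "X \<in> E \<Longrightarrow> X \<in> Ob C"
  using exact unfolding exact_cat_def by blast

lemma E_zero_obj: "\<exists>Z\<in>E. zero_obj C Z"
  using exact unfolding exact_cat_def by blast

lemma E_extension_closed:
  "is_kernel C i p \<Longrightarrow> is_cokernel C p i \<Longrightarrow> cdom C i \<in> E \<Longrightarrow> ccod C p \<in> E \<Longrightarrow> ccod C i \<in> E"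
  using exact unfolding exact_cat_def by blast

lemma E_biproduct_closed: "A \<in> E \<Longrightarrow> B \<in> E \<Longrightarrow> is_biproduct C A B P i1 i2 p1 p2 \<Longrightarrow> P \<in> E"
  using exact unfolding exact_cat_def by blast

lemma conflationD:
  assumes "conflation C E i p"
  shows "is_kernel C i p" "is_cokernel C p i" "cdom C i \<in> E" "ccod C i \<in> E" "ccod C p \<in> E"
    "i \<in> Ar C" "p \<in> Ar C" "cdom C p = ccod C i" "p \<cdot> i = czero C (cdom C i) (ccod C p)"
  using assms unfolding conflation_def is_kernel_def by auto

lemma conflation_zero_cokernel_iso:
  assumes c: "conflation C E i p" and Z: "zero_obj C (ccod C p)"
  shows "iso_mor C i"
proof -
  note cd = conflationD[OF c]
  have B: "ccod C i \<in> Ob C" using cd by (simp add: comp_simps)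
  have "p = czero C (ccod C i) (ccod C p)" using zero_obj_hom_to[OF Z, of p] cd by (simp add: hom_def)
  then have "p \<cdot> cid C (ccod C i) = czero C (cdom C (cid C (ccod C i))) (ccod C p)"
    using cd B by (simp add: comp_simps)
  then obtain u where u: "u \<in> Ar C" "cdom C u = ccod C i" "ccod C u = cdom C i" "i \<cdot> u = cid C (ccod C i)"
    using kernel_factorE[OF cd(1), of "cid C (ccod C i)"] cd B by (simp add: comp_simps) metis
  have "i \<cdot> (u \<cdot> i) = i \<cdot> cid C (cdom C i)" using u cd B by (metis comp_assoc_arr comp_id_left_arr comp_id_right_arr)
  then have "u \<cdot> i = cid C (cdom C i)"
    using mono_cancel[OF kernel_mono[OF cd(1)], of "u \<cdot> i" "cid C (cdom C i)"] u cd by (simp add: comp_simps)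
  then show ?thesis unfolding iso_mor_def using u cd by (auto simp: hom_def)
qed

lemma conflation_comp_iso:
  assumes c: "conflation C E i p" and f: "f \<in> hom C (ccod C i) Y" and g: "g \<in> hom C Y (ccod C i)"
    and fg: "f \<cdot> g = cid C Y" and gf: "g \<cdot> f = cid C (ccod C i)" and Y: "Y \<in> E"
  shows "conflation C E (f \<cdot> i) (p \<cdot> g)"
proof -
  note cd = conflationD[OF c]
  have "cdom C (f \<cdot> i) = cdom C i" "ccod C (f \<cdot> i) = Y" "ccod C (p \<cdot> g) = ccod C p"
    using f g cd by (auto simp: hom_def comp_simps)
  then show ?thesis unfolding conflation_def
    using kernel_comp_iso[OF cd(1) f g fg gf] cokernel_comp_iso[OF cd(2) f g fg gf] cd Y by simp
qed

lemma conflation_zero_id: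
  assumes Z: "zero_obj C Z" "Z \<in> E" and B: "B \<in> E"
  shows "conflation C E (czero C Z B) (cid C B)"
proof -
  have Ob: "Z \<in> Ob C" "B \<in> Ob C" using Z B E_Ob by auto
  have "is_cokernel C (cid C (ccod C (czero C Z B))) (czero C Z B)"
    using id_cokernel_of_zero_dom[OF Z(1), of "czero C Z B"] Ob by (simp add: comp_simps)
  then show ?thesis unfolding conflation_def using zero_kernel_of_id[OF Z(1) Ob(2)] Ob Z B
    by (simp add: comp_simps)
qed

lemma conflation_cokernels_iso:
  "conflation C E i p \<Longrightarrow> conflation C E i p' \<Longrightarrow> iso_obj C (ccod C p) (ccod C p')"
  using cokernels_iso conflationD by blast

lemma biproduct_conflation:
  assumes b: "is_biproduct C A B P i1 i2 p1 p2" and A: "A \<in> E" and B: "B \<in> E"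
  shows "conflation C E i1 p2"
  unfolding conflation_def
  using biproduct_kernel[OF b] biproduct_cokernel[OF b] biproduct_arrD[OF b] E_biproduct_closed[OF A B b] A B
  by simp


text \<open>For conflations \<open>X \<rightarrowtail> Y \<twoheadrightarrow> Z\<close> and \<open>Z' \<rightarrowtail> Z \<twoheadrightarrow> W\<close>, the kernel \<open>K\<close> of the
  composite \<open>Y \<twoheadrightarrow> W\<close> is the pullback of \<open>Z'\<close> along \<open>Y \<twoheadrightarrow> Z\<close>, and \<open>X \<rightarrowtail> K \<twoheadrightarrow> Z'\<close> is a
  conflation.\<close>

lemma conflation_comp_deflation:
  assumes c1: "conflation C E i p" and c2: "conflation C E j q" and jp: "ccod C j = ccod C p"
  obtains s r k where "conflation C E s r" "conflation C E k (q \<cdot> p)"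
    "cdom C s = cdom C i" "ccod C r = cdom C j" "ccod C s = cdom C k" "ccod C k = ccod C i"
proof -
  note d1 = conflationD[OF c1] and d2 = conflationD[OF c2]
  have qp: "q \<cdot> p \<in> Ar C" "cdom C (q \<cdot> p) = ccod C i" "ccod C (q \<cdot> p) = ccod C q"
    using d1 d2 jp by (auto simp: comp_simps)
  obtain k where k: "is_kernel C k (q \<cdot> p)" using kernel_exists qp by blast
  note kd = kernel_arrD[OF k]
  have kk: "ccod C k = ccod C i" "q \<cdot> (p \<cdot> k) = czero C (cdom C (p \<cdot> k)) (ccod C q)"
    using kd qp d1 d2 jp by (auto simp: comp_simps)
  have "epi C (q \<cdot> p)"
    using epi_comp[OF cokernel_epi[OF d1(2)] cokernel_epi[OF d2(2)]] d1 d2 jp by simp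
  then have qp_coker: "is_cokernel C (q \<cdot> p) k" using epi_cokernel_of_kernel k by blast
  obtain r where r: "r \<in> Ar C" "cdom C r = cdom C k" "ccod C r = cdom C j" "j \<cdot> r = p \<cdot> k"
    using kernel_factorE[OF d2(1), of "p \<cdot> k"] kd kk d1 d2 jp by (simp add: comp_simps) metis
  have "(q \<cdot> p) \<cdot> i = czero C (cdom C i) (ccod C (q \<cdot> p))" using d1 d2 jp qp by (simp add: comp_simps)
  then obtain s where s: "s \<in> Ar C" "cdom C s = cdom C i" "ccod C s = cdom C k" "k \<cdot> s = i"
    using kernel_factorE[OF k, of i] d1 qp by (simp add: comp_simps) metis
  have s_ker: "is_kernel C s r"
    using kernel_of_pullback_leg[OF d1(1) k kernel_mono[OF d2(1)]] d2 jp r s by simp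
  have "epi C r"
  proof (rule pullback_epi[OF cokernel_epi[OF d1(2)]])
    fix a b assume "a \<in> Ar C" "ccod C a = cdom C p" "b \<in> Ar C" "ccod C b = cdom C j"
      "cdom C a = cdom C b" "p \<cdot> a = j \<cdot> b"
    then show "\<exists>v. v \<in> Ar C \<and> cdom C v = cdom C b \<and> ccod C v = cdom C r \<and> r \<cdot> v = b"
      using kernel_comp_pullback[OF d2(1) k] d1 d2 jp r by simp
  qed (use d2 jp r in auto)
  then have r_coker: "is_cokernel C r s" using epi_cokernel_of_kernel s_ker by blast
  have "ccod C s \<in> E" using E_extension_closed[OF s_ker r_coker] s d1 r d2 by simp
  then have "conflation C E s r" "conflation C E k (q \<cdot> p)"
    unfolding conflation_def using s_ker r_coker k qp_coker s r kk d1 d2 qp by simp_all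
  then show ?thesis using that s r kk by simp
qed

end

section \<open>Admissible subobject series\<close>

definition series_between ::
  "('o,'m) acat \<Rightarrow> 'o set \<Rightarrow> 'o \<Rightarrow> 'o \<Rightarrow> nat \<Rightarrow> (nat \<Rightarrow> 'o) \<Rightarrow> (nat \<Rightarrow> 'm) \<Rightarrow> bool" where
  "series_between C E A B m Ys hs \<longleftrightarrow> Ys 0 = A \<and> Ys m = B \<and>
     (\<forall>k\<in>{1..m}. inflation C E (hs k) \<and> cdom C (hs k) = Ys (k - 1) \<and> ccod C (hs k) = Ys k)"

definition factors_satisfy :: "('o,'m) acat \<Rightarrow> 'o set \<Rightarrow> ('o \<Rightarrow> bool) \<Rightarrow> (nat \<Rightarrow> 'm) \<Rightarrow> nat \<Rightarrow> bool" where
  "factors_satisfy C E P fs n \<longleftrightarrow> (\<forall>k\<in>{1..n}. \<forall>Z. series_factor C E fs k Z \<longrightarrow> P Z)"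

definition shifted_factors_iso ::
  "('o,'m) acat \<Rightarrow> 'o set \<Rightarrow> (nat \<Rightarrow> 'm) \<Rightarrow> (nat \<Rightarrow> 'm) \<Rightarrow> nat \<Rightarrow> nat \<Rightarrow> bool" where
  "shifted_factors_iso C E gs hs n m \<longleftrightarrow> (\<forall>j\<in>{1..m}. \<forall>Z Z'.
     series_factor C E gs j Z \<longrightarrow> series_factor C E hs (n + j) Z' \<longrightarrow> iso_obj C Z' Z)"

lemma subobj_series_iff_series_between:
  "subobj_series C E X n Xs fs \<longleftrightarrow> zero_obj C (Xs 0) \<and> series_between C E (Xs 0) X n Xs fs"
  unfolding subobj_series_def series_between_def by auto

lemma proper_series_iff_factors_satisfy:
  "proper_series C E X n Xs fs \<longleftrightarrow>
    subobj_series C E X n Xs fs \<and> factors_satisfy C E (\<lambda>Z. \<not> zero_obj C Z) fs n"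
  unfolding proper_series_def factors_satisfy_def by auto

lemma composition_series_iff_factors_satisfy:
  "composition_series C E X n Xs fs \<longleftrightarrow>
    subobj_series C E X n Xs fs \<and> factors_satisfy C E (simple_obj C E) fs n"
  unfolding composition_series_def factors_satisfy_def by auto

lemma series_between_single:
  "inflation C E i \<Longrightarrow>
    series_between C E (cdom C i) (ccod C i) 1 (\<lambda>k. if k = 0 then cdom C i else ccod C i) (\<lambda>_. i)"
  unfolding series_between_def by auto

lemma series_between_snoc:
  assumes "series_between C E A B m Ys hs" "inflation C E k" "cdom C k = B"
  shows "series_between C E A (ccod C k) (Suc m) (Ys(Suc m := ccod C k)) (hs(Suc m := k))"
  using assms unfolding series_between_def by (auto simp: le_Suc_eq)

lemma series_between_append:
  assumes a: "series_between C E X0 A n Xs fs" and b: "series_between C E A B m Ys hs"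
  shows "series_between C E X0 B (n + m)
    (\<lambda>k. if k \<le> n then Xs k else Ys (k - n)) (\<lambda>k. if k \<le> n then fs k else hs (k - n))"
    (is "series_between C E X0 B (n + m) ?Zs ?gs")
proof -
  have "inflation C E (?gs k) \<and> cdom C (?gs k) = ?Zs (k - 1) \<and> ccod C (?gs k) = ?Zs k"
    if k: "k \<in> {1..n + m}" for k
  proof (cases "k \<le> n")
    case True then show ?thesis using a k by (auto simp: series_between_def)
  next
    case False
    then have "k - n \<in> {1..m}" "k - 1 - n = k - n - 1" "k - 1 \<le> n \<longleftrightarrow> k - 1 = n" using k by auto
    moreover have "Ys 0 = Xs n" using a b by (simp add: series_between_def)
    ultimately show ?thesis using b False by (auto simp: series_between_def)
  qed
  then show ?thesis using a b unfolding series_between_def by auto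
qed

lemma series_factor_append:
  "series_factor C E (\<lambda>k. if k \<le> n then fs k else hs (k - n)) k Z \<longleftrightarrow>
    (if k \<le> n then series_factor C E fs k Z else series_factor C E hs (k - n) Z)"
  unfolding series_factor_def by auto

lemma series_between_factor_exists:
  "series_between C E A B m Ys hs \<Longrightarrow> k \<in> {1..m} \<Longrightarrow> \<exists>Z. series_factor C E hs k Z"
  unfolding series_between_def series_factor_def inflation_def by blast


context exact_category
begin

lemma series_factor_in_E: "series_factor C E fs k Z \<Longrightarrow> Z \<in> E"
  unfolding series_factor_def using conflationD by blast

lemma series_factors_iso: "series_factor C E fs k Z \<Longrightarrow> series_factor C E fs k Z' \<Longrightarrow> iso_obj C Z Z'"
  unfolding series_factor_def using conflation_cokernels_iso by blast

lemma simple_obj_iso: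
  assumes S: "simple_obj C E S" and Z: "Z \<in> E" and iso: "iso_obj C Z S"
  shows "simple_obj C E Z"
proof -
  have SE: "S \<in> E" and nz: "\<not> zero_obj C S"
    and simple: "\<And>i. inflation C E i \<Longrightarrow> ccod C i = S \<Longrightarrow> zero_obj C (cdom C i) \<or> iso_mor C i"
    using S unfolding simple_obj_def by auto
  obtain f g where f: "f \<in> hom C Z S" and g: "g \<in> hom C S Z"
    and gf: "g \<cdot> f = cid C Z" and fg: "f \<cdot> g = cid C S"
    using iso unfolding iso_obj_def by blast
  have "zero_obj C (cdom C i) \<or> iso_mor C i" if infl: "inflation C E i" and i: "ccod C i = Z" for i
  proof -
    obtain p where c: "conflation C E i p" using infl unfolding inflation_def by blast
    have "conflation C E (f \<cdot> i) (p \<cdot> g)" using conflation_comp_iso[OF c] f g gf fg SE i by simp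
    moreover have "ccod C (f \<cdot> i) = S" "cdom C (f \<cdot> i) = cdom C i"
      using f i conflationD[OF c] by (auto simp: hom_def comp_simps)
    ultimately have "zero_obj C (cdom C i) \<or> iso_mor C (f \<cdot> i)"
      using simple unfolding inflation_def by metis
    then show ?thesis using iso_mor_cancel_iso_left[of i f S g] conflationD[OF c] f g gf fg i by auto
  qed
  moreover have "\<not> zero_obj C Z" using nz iso_zero_obj iso_obj_sym iso by blast
  ultimately show ?thesis unfolding simple_obj_def using Z by blast
qed

lemma one_step_series:
  assumes Z: "zero_obj C Z" "Z \<in> E" and B: "B \<in> E"
  shows "subobj_series C E B 1 (\<lambda>k. if k = 0 then Z else B) (\<lambda>_. czero C Z B)"
    and "\<And>k W. series_factor C E (\<lambda>_. czero C Z B) k W \<Longrightarrow> iso_obj C W B"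
proof -
  have c: "conflation C E (czero C Z B) (cid C B)" using conflation_zero_id Z B by blast
  have Ob: "Z \<in> Ob C" "B \<in> Ob C" using Z B E_Ob by auto
  show "subobj_series C E B 1 (\<lambda>k. if k = 0 then Z else B) (\<lambda>_. czero C Z B)"
    unfolding subobj_series_def inflation_def using c Z Ob by (auto simp: comp_simps)
  fix k W assume "series_factor C E (\<lambda>_. czero C Z B) k W"
  then obtain p where "conflation C E (czero C Z B) p" "ccod C p = W" unfolding series_factor_def by blast
  then show "iso_obj C W B" using conflation_cokernels_iso[OF _ c] Ob by (auto simp: comp_simps)
qed

lemma conflation_zero_dom_iso:
  assumes c: "conflation C E f q" and Z: "zero_obj C (cdom C f)"
  shows "iso_obj C (ccod C q) (ccod C f)"
proof -
  note cd = conflationD[OF c]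
  have "is_cokernel C (cid C (ccod C f)) f" using id_cokernel_of_zero_dom[OF Z] cd by simp
  from cokernels_iso[OF cd(2) this] show ?thesis using cd by (simp add: comp_simps)
qed

lemma series_lift_along_conflation:
  "conflation C E i p \<Longrightarrow> zero_obj C (Cs 0) \<Longrightarrow> series_between C E (Cs 0) (ccod C p) (Suc m) Cs gs \<Longrightarrow>
   \<exists>Ys hs. series_between C E (cdom C i) (ccod C i) (Suc m) Ys hs \<and> shifted_factors_iso C E gs hs 0 (Suc m)"
proof (induction m arbitrary: i p)
  case 0
  then have c: "conflation C E i p" and infl: "inflation C E i" and zero: "zero_obj C (cdom C (gs 1))"
    and gs: "inflation C E (gs 1)" "ccod C (gs 1) = ccod C p"
    unfolding series_between_def inflation_def by auto
  have "iso_obj C Z' Z" if Z: "series_factor C E gs 1 Z" and Z': "series_factor C E (\<lambda>_. i) 1 Z'" for Z Z'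
  proof -
    obtain q where q: "conflation C E (gs 1) q" "ccod C q = Z" using Z unfolding series_factor_def by blast
    obtain q' where q': "conflation C E i q'" "ccod C q' = Z'" using Z' unfolding series_factor_def by blast
    have "iso_obj C Z (ccod C p)" using conflation_zero_dom_iso[OF q(1) zero] q gs by simp
    moreover have "iso_obj C Z' (ccod C p)" using conflation_cokernels_iso[OF q'(1) c] q' by simp
    ultimately show ?thesis using iso_obj_trans iso_obj_sym by blast
  qed
  then show ?case using series_between_single[OF infl] unfolding shifted_factors_iso_def by fastforce
next
  case (Suc m)
  note c = Suc.prems(1) and zero = Suc.prems(2) and series = Suc.prems(3)
  define j where "j = gs (Suc (Suc m))"
  have j: "inflation C E j" "cdom C j = Cs (Suc m)" "ccod C j = ccod C p"
    using series unfolding series_between_def j_def by auto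
  obtain q where q: "conflation C E j q" using j unfolding inflation_def by blast
  obtain s r k where srk: "conflation C E s r" "conflation C E k (q \<cdot> p)"
    "cdom C s = cdom C i" "ccod C r = cdom C j" "ccod C s = cdom C k" "ccod C k = ccod C i"
    using conflation_comp_deflation[OF c q j(3)] by blast
  have "series_between C E (Cs 0) (ccod C r) (Suc m) Cs gs"
    using series srk j unfolding series_between_def by auto
  then obtain Ys hs where IH: "series_between C E (cdom C s) (ccod C s) (Suc m) Ys hs"
    "shifted_factors_iso C E gs hs 0 (Suc m)"
    using Suc.IH[OF srk(1) zero] by blast
  have k: "inflation C E k" using srk(2) unfolding inflation_def by blast
  have "iso_obj C Z' Z" if x: "x \<in> {1..Suc (Suc m)}" and Z: "series_factor C E gs x Z"
    and Z': "series_factor C E (hs(Suc (Suc m) := k)) x Z'" for x Z Z'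
  proof (cases "x = Suc (Suc m)")
    case True
    obtain q1 where q1: "conflation C E j q1" "ccod C q1 = Z" using Z True unfolding series_factor_def j_def by blast
    obtain q2 where q2: "conflation C E k q2" "ccod C q2 = Z'" using Z' True unfolding series_factor_def by auto
    have "iso_obj C Z (ccod C q)" using conflation_cokernels_iso[OF q1(1) q] q1 by simp
    moreover have "iso_obj C Z' (ccod C (q \<cdot> p))" using conflation_cokernels_iso[OF q2(1) srk(2)] q2 by simp
    moreover have "ccod C (q \<cdot> p) = ccod C q" using conflationD[OF c] conflationD[OF q] j by (simp add: comp_simps)
    ultimately show ?thesis using iso_obj_trans iso_obj_sym by metis
  next
    case False
    then have "x \<in> {1..Suc m}" "series_factor C E hs x Z'" using x Z' by (auto simp: series_factor_def)
    then show ?thesis using IH(2) Z unfolding shifted_factors_iso_def by auto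
  qed
  then show ?case
    using series_between_snoc[OF IH(1) k] srk unfolding shifted_factors_iso_def by fastforce
qed

definition iso_closed :: "('o \<Rightarrow> bool) \<Rightarrow> bool" where
  "iso_closed P \<longleftrightarrow> (\<forall>Z Z'. Z' \<in> E \<longrightarrow> iso_obj C Z' Z \<longrightarrow> P Z \<longrightarrow> P Z')"

lemma iso_closed_nonzero: "iso_closed (\<lambda>Z. \<not> zero_obj C Z)"
  unfolding iso_closed_def using iso_zero_obj iso_obj_sym by blast

lemma iso_closed_simple: "iso_closed (simple_obj C E)"
  unfolding iso_closed_def using simple_obj_iso by blast

lemma subobj_series_glue:
  assumes a: "subobj_series C E (cdom C i) n As fa" and c: "conflation C E i p"
    and b: "subobj_series C E (ccod C p) m Cs gs" and m: "m \<ge> 1"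
  obtains Xs ks where "subobj_series C E (ccod C i) (n + m) Xs ks" "\<forall>k\<le>n. ks k = fa k"
    "shifted_factors_iso C E gs ks n m"
proof -
  obtain m' where m': "m = Suc m'" using m by (cases m) auto
  have a': "zero_obj C (As 0)" "series_between C E (As 0) (cdom C i) n As fa"
    and b': "zero_obj C (Cs 0)" "series_between C E (Cs 0) (ccod C p) m Cs gs"
    using a b unfolding subobj_series_iff_series_between by auto
  obtain Ys hs where Y: "series_between C E (cdom C i) (ccod C i) m Ys hs"
    "shifted_factors_iso C E gs hs 0 m"
    using series_lift_along_conflation[OF c, of Cs m' gs] b' m' by blast
  define Xs where "Xs = (\<lambda>k. if k \<le> n then As k else Ys (k - n))"
  define ks where "ks = (\<lambda>k. if k \<le> n then fa k else hs (k - n))"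
  have "series_between C E (As 0) (ccod C i) (n + m) Xs ks"
    unfolding Xs_def ks_def using series_between_append[OF a'(2) Y(1)] .
  moreover have "Xs 0 = As 0" unfolding Xs_def by simp
  ultimately have "subobj_series C E (ccod C i) (n + m) Xs ks"
    using a'(1) unfolding subobj_series_iff_series_between by simp
  moreover have "shifted_factors_iso C E gs ks n m"
    using Y(2) unfolding shifted_factors_iso_def ks_def by (auto simp: series_factor_append)
  ultimately show ?thesis using that unfolding ks_def by simp
qed

lemma factors_satisfy_glue:
  assumes P: "iso_closed P" and fa: "factors_satisfy C E P fa n" and gs: "factors_satisfy C E P gs m"
    and b: "subobj_series C E Y m Cs gs"
    and prefix: "\<forall>k\<le>n. ks k = fa k" and shifted: "shifted_factors_iso C E gs ks n m"
  shows "factors_satisfy C E P ks (n + m)"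
  unfolding factors_satisfy_def
proof (intro ballI allI impI)
  fix k Z' assume k: "k \<in> {1..n + m}" and Z': "series_factor C E ks k Z'"
  show "P Z'"
  proof (cases "k \<le> n")
    case True
    then have "series_factor C E fa k Z'" using Z' prefix unfolding series_factor_def by auto
    then show ?thesis using fa True k unfolding factors_satisfy_def by auto
  next
    case False
    then have j: "k - n \<in> {1..m}" "k = n + (k - n)" using k by auto
    have "series_between C E (Cs 0) Y m Cs gs" using b unfolding subobj_series_iff_series_between by blast
    from series_between_factor_exists[OF this j(1)]
    obtain Z where Z: "series_factor C E gs (k - n) Z" ..
    have "P Z" using gs Z j unfolding factors_satisfy_def by auto
    moreover have "iso_obj C Z' Z" using shifted Z Z' j unfolding shifted_factors_iso_def by metis
    moreover have "Z' \<in> E" using series_factor_in_E Z' by blast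
    ultimately show ?thesis using P unfolding iso_closed_def by blast
  qed
qed

lemma one_step_series_factors_satisfy:
  assumes Z: "zero_obj C Z" "Z \<in> E" and B: "B \<in> E" and P: "iso_closed P" "P B"
  shows "factors_satisfy C E P (\<lambda>_. czero C Z B) 1"
  unfolding factors_satisfy_def using one_step_series(2)[OF Z B] P series_factor_in_E
  unfolding iso_closed_def by blast

section \<open>Existence of composition series\<close>

lemma subobj_series_length_pos: "subobj_series C E X m Xs fs \<Longrightarrow> \<not> zero_obj C X \<Longrightarrow> m \<ge> 1"
  unfolding subobj_series_def by (cases m) auto

lemma composition_series_glue:
  assumes a: "composition_series C E (cdom C i) n As fa" and c: "conflation C E i p"
    and b: "composition_series C E (ccod C p) m Cs gs" and m: "m \<ge> 1"
  obtains Xs ks where "composition_series C E (ccod C i) (n + m) Xs ks" "\<forall>k\<le>n. ks k = fa k"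
    "shifted_factors_iso C E gs ks n m"
proof -
  have a': "subobj_series C E (cdom C i) n As fa" "factors_satisfy C E (simple_obj C E) fa n"
    and b': "subobj_series C E (ccod C p) m Cs gs" "factors_satisfy C E (simple_obj C E) gs m"
    using a b unfolding composition_series_iff_factors_satisfy by auto
  obtain Xs ks where "subobj_series C E (ccod C i) (n + m) Xs ks" "\<forall>k\<le>n. ks k = fa k"
    "shifted_factors_iso C E gs ks n m"
    using subobj_series_glue[OF a'(1) c b'(1) m] .
  moreover have "factors_satisfy C E (simple_obj C E) ks (n + m)"
    using factors_satisfy_glue[OF iso_closed_simple a'(2) b'(2) b'(1)] calculation(2,3) .
  ultimately show ?thesis using that unfolding composition_series_iff_factors_satisfy by blast
qed

lemma proper_length_bound_sub:
  assumes c: "conflation C E i p" and nonzero: "\<not> zero_obj C (ccod C p)"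
    and bound: "\<And>n Xs fs. proper_series C E (ccod C i) n Xs fs \<Longrightarrow> n \<le> Suc N"
    and pr: "proper_series C E (cdom C i) n Xs fs"
  shows "n \<le> N"
proof -
  obtain Z where Z: "Z \<in> E" "zero_obj C Z" using E_zero_obj by blast
  note cd = conflationD[OF c]
  have a: "subobj_series C E (cdom C i) n Xs fs" "factors_satisfy C E (\<lambda>Z. \<not> zero_obj C Z) fs n"
    using pr unfolding proper_series_iff_factors_satisfy by auto
  note b = one_step_series(1)[OF Z(2,1) cd(5)]
    one_step_series_factors_satisfy[OF Z(2,1) cd(5) iso_closed_nonzero nonzero]
  obtain Xs' fs' where "subobj_series C E (ccod C i) (n + 1) Xs' fs'" "\<forall>k\<le>n. fs' k = fs k"
    "shifted_factors_iso C E (\<lambda>_. czero C Z (ccod C p)) fs' n 1"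
    using subobj_series_glue[OF a(1) c b(1)] by auto
  moreover from this have "factors_satisfy C E (\<lambda>Z. \<not> zero_obj C Z) fs' (n + 1)"
    using factors_satisfy_glue[OF iso_closed_nonzero a(2) b(2) b(1)] by blast
  ultimately have "proper_series C E (ccod C i) (n + 1) Xs' fs'"
    unfolding proper_series_iff_factors_satisfy by blast
  then show ?thesis using bound by fastforce
qed

lemma proper_length_bound_quotient:
  assumes c: "conflation C E i p" and nonzero: "\<not> zero_obj C (cdom C i)"
    and bound: "\<And>n Xs fs. proper_series C E (ccod C i) n Xs fs \<Longrightarrow> n \<le> Suc N"
    and pr: "proper_series C E (ccod C p) m Xs fs"
  shows "m \<le> N"
proof (cases "m = 0")
  case False
  then have m: "m \<ge> 1" by simp
  obtain Z where Z: "Z \<in> E" "zero_obj C Z" using E_zero_obj by blast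
  note cd = conflationD[OF c]
  have b: "subobj_series C E (ccod C p) m Xs fs" "factors_satisfy C E (\<lambda>Z. \<not> zero_obj C Z) fs m"
    using pr unfolding proper_series_iff_factors_satisfy by auto
  note a = one_step_series(1)[OF Z(2,1) cd(3)]
    one_step_series_factors_satisfy[OF Z(2,1) cd(3) iso_closed_nonzero nonzero]
  obtain Xs' fs' where "subobj_series C E (ccod C i) (1 + m) Xs' fs'" "\<forall>k\<le>1. fs' k = czero C Z (cdom C i)"
    "shifted_factors_iso C E fs fs' 1 m"
    using subobj_series_glue[OF a(1) c b(1) m] by auto
  moreover from this have "factors_satisfy C E (\<lambda>Z. \<not> zero_obj C Z) fs' (1 + m)"
    using factors_satisfy_glue[OF iso_closed_nonzero a(2) b(2) b(1)] by blast
  ultimately have "proper_series C E (ccod C i) (1 + m) Xs' fs'"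
    unfolding proper_series_iff_factors_satisfy by blast
  then show ?thesis using bound by fastforce
qed simp

lemma zero_obj_composition_series: "zero_obj C B \<Longrightarrow> composition_series C E B 0 (\<lambda>_. B) fs"
  unfolding composition_series_def subobj_series_def by simp

lemma one_step_proper_series:
  assumes Z: "zero_obj C Z" "Z \<in> E" and B: "B \<in> E" "\<not> zero_obj C B"
  shows "proper_series C E B 1 (\<lambda>k. if k = 0 then Z else B) (\<lambda>_. czero C Z B)"
  unfolding proper_series_iff_factors_satisfy
  using one_step_series(1)[OF Z B(1)] one_step_series_factors_satisfy[OF Z B(1) iso_closed_nonzero B(2)]
  by blast

lemma one_step_composition_series:
  assumes Z: "zero_obj C Z" "Z \<in> E" and S: "simple_obj C E S"
  shows "composition_series C E S 1 (\<lambda>k. if k = 0 then Z else S) (\<lambda>_. czero C Z S)"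
proof -
  have "S \<in> E" using S unfolding simple_obj_def by blast
  then show ?thesis unfolding composition_series_iff_factors_satisfy
    using one_step_series(1)[OF Z] one_step_series_factors_satisfy[OF Z _ iso_closed_simple S] by blast
qed

lemma non_simple_conflation:
  assumes B: "B \<in> E" "\<not> zero_obj C B" "\<not> simple_obj C E B"
  obtains i p where "conflation C E i p" "ccod C i = B" "\<not> zero_obj C (cdom C i)" "\<not> zero_obj C (ccod C p)"
proof -
  obtain i where i: "inflation C E i" "ccod C i = B" "\<not> zero_obj C (cdom C i)" "\<not> iso_mor C i"
    using B unfolding simple_obj_def by blast
  then obtain p where c: "conflation C E i p" unfolding inflation_def by blast
  then have "\<not> zero_obj C (ccod C p)" using conflation_zero_cokernel_iso i(4) by blast
  then show ?thesis using that c i by blast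
qed

lemma composition_series_exists_bounded:
  "B \<in> E \<Longrightarrow> (\<And>n Xs fs. proper_series C E B n Xs fs \<Longrightarrow> n \<le> N) \<Longrightarrow>
    \<exists>n Xs fs. composition_series C E B n Xs fs"
proof (induction N arbitrary: B)
  case 0
  obtain Z where Z: "Z \<in> E" "zero_obj C Z" using E_zero_obj by blast
  then have "zero_obj C B" using one_step_proper_series[OF Z(2,1) "0.prems"(1)] "0.prems"(2) by fastforce
  then show ?case using zero_obj_composition_series by blast
next
  case (Suc N)
  obtain Z where Z: "Z \<in> E" "zero_obj C Z" using E_zero_obj by blast
  consider "zero_obj C B" | "simple_obj C E B" | "\<not> zero_obj C B" "\<not> simple_obj C E B" by blast
  then show ?case
  proof cases
    case 1 then show ?thesis using zero_obj_composition_series by blast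
  next
    case 2 then show ?thesis using one_step_composition_series[OF Z(2,1)] by blast
  next
    case 3
    then obtain i p where c: "conflation C E i p" and i: "ccod C i = B"
      and nonzero: "\<not> zero_obj C (cdom C i)" "\<not> zero_obj C (ccod C p)"
      using non_simple_conflation Suc.prems(1) by blast
    note cd = conflationD[OF c]
    obtain n As fa where A: "composition_series C E (cdom C i) n As fa"
      using Suc.IH[OF cd(3)] proper_length_bound_sub[OF c nonzero(2)] Suc.prems(2) i by blast
    obtain m Cs gs where Q: "composition_series C E (ccod C p) m Cs gs"
      using Suc.IH[OF cd(5)] proper_length_bound_quotient[OF c nonzero(1)] Suc.prems(2) i by blast
    have "m \<ge> 1" using subobj_series_length_pos Q nonzero(2) unfolding composition_series_def by blast
    then show ?thesis using composition_series_glue[OF A c Q] i by metis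
  qed
qed

lemma composition_series_zero_obj_length:
  assumes Z: "zero_obj C B" and c: "composition_series C E B n Xs fs"
  shows "n = 0"
proof (rule ccontr)
  assume "n \<noteq> 0"
  then have n: "n \<in> {1..n}" by auto
  have "inflation C E (fs n)" "ccod C (fs n) = B" using c n unfolding composition_series_def subobj_series_def by auto
  then obtain p where p: "conflation C E (fs n) p" "cdom C p = B" unfolding inflation_def using conflationD by blast
  have "zero_obj C (ccod C p)" using epi_from_zero_obj[OF Z cokernel_epi[OF conflationD(2)[OF p(1)]] p(2)] .
  moreover have "simple_obj C E (ccod C p)"
    using c n p(1) unfolding composition_series_def series_factor_def by blast
  ultimately show False unfolding simple_obj_def by blast
qed

lemma composition_series_exists:
  assumes "length_cat C E" and "B \<in> E"
  shows "\<exists>n Xs fs. composition_series C E B n Xs fs"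
  using assms composition_series_exists_bounded unfolding length_cat_def finite_length_def by blast

section \<open>Serre subcategories\<close>

lemma serre_subcatD:
  assumes "serre_subcat C E S"
  shows "S \<subseteq> E" "\<exists>Z\<in>S. zero_obj C Z"
    "\<And>X Y. X \<in> S \<Longrightarrow> Y \<in> E \<Longrightarrow> iso_obj C X Y \<Longrightarrow> Y \<in> S"
    "\<And>A B P i1 i2 p1 p2. A \<in> S \<Longrightarrow> B \<in> S \<Longrightarrow> is_biproduct C A B P i1 i2 p1 p2 \<Longrightarrow> P \<in> S"
    "\<And>i p. conflation C E i p \<Longrightarrow> ccod C i \<in> S \<longleftrightarrow> cdom C i \<in> S \<and> ccod C p \<in> S"
  using assms unfolding serre_subcat_def by blast+

lemma serre_subcat_zero_obj: "serre_subcat C E S \<Longrightarrow> zero_obj C Z \<Longrightarrow> Z \<in> E \<Longrightarrow> Z \<in> S"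
  using serre_subcatD(2,3) zero_objs_iso by blast

lemma serre_subcat_E: "serre_subcat C E E"
  unfolding serre_subcat_def using E_zero_obj E_biproduct_closed conflationD by blast

lemma serre_subcat_Inter:
  assumes F: "F \<noteq> {}" "\<And>S. S \<in> F \<Longrightarrow> serre_subcat C E S"
  shows "serre_subcat C E (\<Inter>F)"
proof -
  obtain Z where Z: "Z \<in> E" "zero_obj C Z" using E_zero_obj by blast
  have "\<Inter>F \<subseteq> E" using F serre_subcatD(1) by blast
  moreover have "\<exists>Z\<in>\<Inter>F. zero_obj C Z" using serre_subcat_zero_obj F(2) Z by blast
  moreover have "\<forall>X\<in>\<Inter>F. \<forall>Y\<in>E. iso_obj C X Y \<longrightarrow> Y \<in> \<Inter>F"
    using F(2) serre_subcatD(3) by blast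
  moreover have "\<forall>A\<in>\<Inter>F. \<forall>B\<in>\<Inter>F. \<forall>P i1 i2 p1 p2. is_biproduct C A B P i1 i2 p1 p2 \<longrightarrow> P \<in> \<Inter>F"
    using F(2) serre_subcatD(4) by blast
  moreover have "\<forall>i p. conflation C E i p \<longrightarrow> (ccod C i \<in> \<Inter>F \<longleftrightarrow> cdom C i \<in> \<Inter>F \<and> ccod C p \<in> \<Inter>F)"
    using F serre_subcatD(5) by blast
  ultimately show ?thesis unfolding serre_subcat_def by (intro conjI)
qed

lemma serre_closure_serre_subcat: "X \<subseteq> E \<Longrightarrow> serre_subcat C E (serre_closure C E X)"
  unfolding serre_closure_def using serre_subcat_Inter[of "{S. serre_subcat C E S \<and> X \<subseteq> S}"] serre_subcat_E
  by blast

lemma serre_closure_least: "serre_subcat C E S \<Longrightarrow> X \<subseteq> S \<Longrightarrow> serre_closure C E X \<subseteq> S"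
  unfolding serre_closure_def by blast

lemma serre_closure_upper: "X \<subseteq> serre_closure C E X"
  unfolding serre_closure_def by blast

lemma serre_closure_mono: "X \<subseteq> Y \<Longrightarrow> serre_closure C E X \<subseteq> serre_closure C E Y"
  unfolding serre_closure_def by blast

lemma iso_class_self: "X \<in> E \<Longrightarrow> X \<in> iso_class C E X"
  unfolding iso_class_def using iso_obj_refl E_Ob by blast

lemma iso_class_eq: "X \<in> E \<Longrightarrow> Y \<in> E \<Longrightarrow> iso_obj C X Y \<Longrightarrow> iso_class C E X = iso_class C E Y"
  unfolding iso_class_def using iso_obj_trans iso_obj_sym by blast

lemma Union_simp_classes_subset_E: "\<X> \<subseteq> simp_classes C E \<Longrightarrow> \<Union>\<X> \<subseteq> E"
  unfolding simp_classes_def iso_class_def by blast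

lemma serre_subcat_subobj_series_terms:
  assumes S: "serre_subcat C E S" and c: "subobj_series C E X n Xs fs" and X: "X \<in> S"
  shows "k \<le> n \<Longrightarrow> Xs (n - k) \<in> S"
proof (induction k)
  case 0 then show ?case using c X unfolding subobj_series_def by simp
next
  case (Suc k)
  then have t: "n - k \<in> {1..n}" "n - Suc k = n - k - 1" and Xt: "Xs (n - k) \<in> S" by auto
  obtain p where "conflation C E (fs (n - k)) p"
    and "cdom C (fs (n - k)) = Xs (n - k - 1)" "ccod C (fs (n - k)) = Xs (n - k)"
    using c t(1) unfolding subobj_series_def inflation_def by blast
  then show ?case using serre_subcatD(5)[OF S] Xt t(2) by metis
qed

lemma serre_subcat_subobj_series_factor:
  assumes S: "serre_subcat C E S" and c: "subobj_series C E X n Xs fs" and X: "X \<in> S"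
    and k: "k \<in> {1..n}" and Z: "series_factor C E fs k Z"
  shows "Z \<in> S"
proof -
  obtain p where p: "conflation C E (fs k) p" "ccod C p = Z" using Z unfolding series_factor_def by blast
  have "ccod C (fs k) = Xs k" using c k unfolding subobj_series_def by blast
  moreover have "Xs k \<in> S" using serre_subcat_subobj_series_terms[OF S c X, of "n - k"] k by simp
  ultimately show ?thesis using serre_subcatD(5)[OF S p(1)] p(2) by simp
qed

lemma serre_subcat_subobj_series_top:
  assumes S: "serre_subcat C E S" and c: "subobj_series C E X n Xs fs" and X0: "Xs 0 \<in> E"
    and factors: "factors_satisfy C E (\<lambda>Z. Z \<in> S) fs n"
  shows "X \<in> S"
proof -
  have "Xs k \<in> S" if "k \<le> n" for k
    using that
  proof (induction k)
    case 0 then show ?case using serre_subcat_zero_obj[OF S] c X0 unfolding subobj_series_def by blast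
  next
    case (Suc k)
    then have k: "Suc k \<in> {1..n}" and Xk: "Xs k \<in> S" by auto
    obtain p where p: "conflation C E (fs (Suc k)) p"
      and fs: "cdom C (fs (Suc k)) = Xs k" "ccod C (fs (Suc k)) = Xs (Suc k)"
      using c k unfolding subobj_series_def inflation_def by fastforce
    have "ccod C p \<in> S" using factors k p unfolding factors_satisfy_def series_factor_def by blast
    then show ?case using serre_subcatD(5)[OF S p] Xk fs by simp
  qed
  then show ?thesis using c unfolding subobj_series_def by blast
qed

lemma serre_subcat_generated_by_simples:
  assumes len: "length_cat C E" and S: "serre_subcat C E S"
  shows "S = serre_closure C E (\<Union>{K \<in> simp_classes C E. K \<subseteq> S})"
proof
  let ?X = "{K \<in> simp_classes C E. K \<subseteq> S}"
  let ?Cl = "serre_closure C E (\<Union>?X)"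
  show "?Cl \<subseteq> S" by (rule serre_closure_least[OF S]) blast
  show "S \<subseteq> ?Cl"
  proof
    fix B assume B: "B \<in> S"
    have "?X \<subseteq> simp_classes C E" by blast
    then have Cl: "serre_subcat C E ?Cl" using serre_closure_serre_subcat Union_simp_classes_subset_E by metis
    obtain n Xs fs where c: "composition_series C E B n Xs fs"
      using composition_series_exists[OF len] B serre_subcatD(1)[OF S] by blast
    then have c': "subobj_series C E B n Xs fs" unfolding composition_series_def by blast
    have "Z \<in> ?Cl" if k: "k \<in> {1..n}" and Z: "series_factor C E fs k Z" for k Z
    proof -
      have "Z \<in> S" using serre_subcat_subobj_series_factor[OF S c' B k Z] .
      then have "iso_class C E Z \<subseteq> S" unfolding iso_class_def using serre_subcatD(3)[OF S] iso_obj_sym by blast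
      moreover have "simple_obj C E Z" using c k Z unfolding composition_series_def by blast
      ultimately have "iso_class C E Z \<in> ?X" unfolding simp_classes_def by blast
      moreover have "Z \<in> iso_class C E Z" using iso_class_self series_factor_in_E[OF Z] .
      ultimately have "Z \<in> \<Union>?X" by blast
      then show ?thesis by (rule subsetD[OF serre_closure_upper])
    qed
    moreover have "Xs 0 \<in> E"
      using serre_subcat_subobj_series_terms[OF S c' B, of n] serre_subcatD(1)[OF S] by auto
    ultimately show "B \<in> ?Cl"
      using serre_subcat_subobj_series_top[OF Cl c'] unfolding factors_satisfy_def by simp
  qed
qed

section \<open>Objects with composition factors in a given class\<close>

lemma series_factor_comp_iso:
  assumes c: "conflation C E i p" and f: "f \<in> hom C (ccod C i) B" and g: "g \<in> hom C B (ccod C i)"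
    and fg: "f \<cdot> g = cid C B" and gf: "g \<cdot> f = cid C (ccod C i)" and B: "B \<in> E"
  shows "(\<exists>q. conflation C E (f \<cdot> i) q \<and> ccod C q = Z) \<longleftrightarrow> (\<exists>q. conflation C E i q \<and> ccod C q = Z)"
proof
  note cd = conflationD[OF c]
  have f': "f \<in> Ar C" "cdom C f = ccod C i" "ccod C f = B"
    and g': "g \<in> Ar C" "cdom C g = B" "ccod C g = ccod C i" using f g by (auto simp: hom_def)
  assume "\<exists>q. conflation C E (f \<cdot> i) q \<and> ccod C q = Z"
  then obtain q where q: "conflation C E (f \<cdot> i) q" "ccod C q = Z" by blast
  have fi: "cdom C (f \<cdot> i) = cdom C i" "ccod C (f \<cdot> i) = B" using f' cd by (auto simp: comp_simps)
  have "conflation C E (g \<cdot> (f \<cdot> i)) (q \<cdot> f)"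
    using conflation_comp_iso[OF q(1), of g "ccod C i" f] f g fg gf cd fi by simp
  moreover have "g \<cdot> (f \<cdot> i) = i" using f' g' cd gf by (simp flip: comp_assoc_arr add: comp_id_left_arr)
  moreover have "ccod C (q \<cdot> f) = Z" using q conflationD[OF q(1)] f' fi by (simp add: comp_simps)
  ultimately show "\<exists>q. conflation C E i q \<and> ccod C q = Z" by metis
next
  assume "\<exists>q. conflation C E i q \<and> ccod C q = Z"
  then obtain q where q: "conflation C E i q" "ccod C q = Z" by blast
  have "conflation C E (f \<cdot> i) (q \<cdot> g)" using conflation_comp_iso[OF q(1) f g fg gf B] .
  moreover have "ccod C (q \<cdot> g) = Z" using q conflationD[OF q(1)] g by (simp add: hom_def comp_simps)
  ultimately show "\<exists>q. conflation C E (f \<cdot> i) q \<and> ccod C q = Z" by blast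
qed

lemma composition_series_retarget:
  assumes c: "composition_series C E B' n Xs fs" and n: "n \<ge> 1" and B: "B \<in> E"
    and f: "f \<in> hom C B' B" and g: "g \<in> hom C B B'" and fg: "f \<cdot> g = cid C B" and gf: "g \<cdot> f = cid C B'"
  shows "composition_series C E B n (Xs(n := B)) (fs(n := f \<cdot> fs n))"
    and "series_factor C E (fs(n := f \<cdot> fs n)) k Z \<longleftrightarrow> series_factor C E fs k Z"
proof -
  have top: "inflation C E (fs n)" "ccod C (fs n) = B'" "cdom C (fs n) = Xs (n - 1)"
    using c n unfolding composition_series_def subobj_series_def by auto
  then obtain p where p: "conflation C E (fs n) p" unfolding inflation_def by blast
  note pd = conflationD[OF p]
  have factor: "series_factor C E (fs(n := f \<cdot> fs n)) k Z \<longleftrightarrow> series_factor C E fs k Z" for k Z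
    using series_factor_comp_iso[OF p, of f B g Z] f g fg gf B top unfolding series_factor_def by auto
  then show "series_factor C E (fs(n := f \<cdot> fs n)) k Z \<longleftrightarrow> series_factor C E fs k Z" .
  have "inflation C E (f \<cdot> fs n)"
    using conflation_comp_iso[OF p, of f B g] f g fg gf B top unfolding inflation_def by auto
  moreover have "cdom C (f \<cdot> fs n) = Xs (n - 1)" "ccod C (f \<cdot> fs n) = B"
    using f top pd by (auto simp: hom_def comp_simps)
  ultimately have "subobj_series C E B n (Xs(n := B)) (fs(n := f \<cdot> fs n))"
    using c n unfolding composition_series_def subobj_series_def by auto
  then show "composition_series C E B n (Xs(n := B)) (fs(n := f \<cdot> fs n))"
    using c factor unfolding composition_series_def by simp
qed

definition objs_with_factors_in :: "'o set \<Rightarrow> 'o set" where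
  "objs_with_factors_in U =
    {B \<in> E. \<forall>n Xs fs. composition_series C E B n Xs fs \<longrightarrow> factors_satisfy C E (\<lambda>Z. Z \<in> U) fs n}"

lemma objs_with_factors_in_iso:
  assumes B: "B \<in> objs_with_factors_in U" and B': "B' \<in> E" and iso: "iso_obj C B' B"
  shows "B' \<in> objs_with_factors_in U"
proof -
  have BE: "B \<in> E" using B unfolding objs_with_factors_in_def by blast
  have "factors_satisfy C E (\<lambda>Z. Z \<in> U) fs n" if c: "composition_series C E B' n Xs fs" for n Xs fs
  proof (cases "n = 0")
    case False
    obtain f g where fg: "f \<in> hom C B' B" "g \<in> hom C B B'" "f \<cdot> g = cid C B" "g \<cdot> f = cid C B'"
      using iso unfolding iso_obj_def by blast
    note retarget = composition_series_retarget[OF c _ BE fg]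
    have "factors_satisfy C E (\<lambda>Z. Z \<in> U) (fs(n := f \<cdot> fs n)) n"
      using B retarget(1) False unfolding objs_with_factors_in_def by auto
    then show ?thesis using retarget(2) False unfolding factors_satisfy_def by auto
  qed (simp add: factors_satisfy_def)
  then show ?thesis unfolding objs_with_factors_in_def using B' by blast
qed

lemma jordan_hoelder_factors_satisfy:
  assumes jh: "jordan_hoelder C E" and P: "iso_closed P" and X: "X \<in> E"
    and c1: "composition_series C E X n Xs fs" and P_fs: "factors_satisfy C E P fs n"
    and c2: "composition_series C E X m Ys gs"
  shows "factors_satisfy C E P gs m"
  unfolding factors_satisfy_def
proof (intro ballI allI impI)
  obtain \<sigma> where nm: "n = m" and \<sigma>: "bij_betw \<sigma> {1..n} {1..n}"
    and iso: "\<forall>k\<in>{1..n}. \<exists>Z Z'. series_factor C E fs k Z \<and> series_factor C E gs (\<sigma> k) Z' \<and> iso_obj C Z Z'"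
    using jh X c1 c2 unfolding jordan_hoelder_def by blast
  fix k' W assume k': "k' \<in> {1..m}" and W: "series_factor C E gs k' W"
  have "k' \<in> \<sigma> ` {1..n}" using \<sigma> nm k' unfolding bij_betw_def by simp
  then obtain k where k: "k \<in> {1..n}" "\<sigma> k = k'" by blast
  then obtain Z Z' where Z: "series_factor C E fs k Z" "series_factor C E gs k' Z'" "iso_obj C Z Z'"
    using iso by blast
  have "P Z" using P_fs Z(1) k unfolding factors_satisfy_def by blast
  moreover have "iso_obj C W Z" using series_factors_iso[OF W Z(2)] Z(3) iso_obj_sym iso_obj_trans by blast
  ultimately show "P W" using P series_factor_in_E W unfolding iso_closed_def by blast
qed

lemma objs_with_factors_in_sub:
  assumes len: "length_cat C E" and c: "conflation C E i p" and nonzero: "\<not> zero_obj C (ccod C p)"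
    and B: "ccod C i \<in> objs_with_factors_in U"
  shows "cdom C i \<in> objs_with_factors_in U"
proof -
  note cd = conflationD[OF c]
  obtain m Cs gs where Q: "composition_series C E (ccod C p) m Cs gs"
    using composition_series_exists[OF len cd(5)] by blast
  have m: "m \<ge> 1" using subobj_series_length_pos Q nonzero unfolding composition_series_def by blast
  have "factors_satisfy C E (\<lambda>Z. Z \<in> U) fa n" if A: "composition_series C E (cdom C i) n As fa" for n As fa
  proof -
    obtain Xs ks where K: "composition_series C E (ccod C i) (n + m) Xs ks" "\<forall>k\<le>n. ks k = fa k"
      using composition_series_glue[OF A c Q m] by blast
    then have ks: "factors_satisfy C E (\<lambda>Z. Z \<in> U) ks (n + m)"
      using B unfolding objs_with_factors_in_def by blast
    show ?thesis unfolding factors_satisfy_def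
    proof (intro ballI allI impI)
      fix k Z assume k: "k \<in> {1..n}" and Z: "series_factor C E fa k Z"
      then have "series_factor C E ks k Z" using K(2) by (simp add: series_factor_def)
      then show "Z \<in> U" using ks k unfolding factors_satisfy_def by auto
    qed
  qed
  then show ?thesis unfolding objs_with_factors_in_def using cd by blast
qed

lemma objs_with_factors_in_quotient:
  assumes len: "length_cat C E" and U: "iso_closed (\<lambda>Z. Z \<in> U)" and c: "conflation C E i p"
    and nonzero: "\<not> zero_obj C (ccod C p)" and B: "ccod C i \<in> objs_with_factors_in U"
  shows "ccod C p \<in> objs_with_factors_in U"
proof -
  note cd = conflationD[OF c]
  obtain n As fa where A: "composition_series C E (cdom C i) n As fa"
    using composition_series_exists[OF len cd(3)] by blast
  have "factors_satisfy C E (\<lambda>Z. Z \<in> U) gs m" if Q: "composition_series C E (ccod C p) m Cs gs" for m Cs gs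
    unfolding factors_satisfy_def
  proof (intro ballI allI impI)
    fix j W assume j: "j \<in> {1..m}" and W: "series_factor C E gs j W"
    have m: "m \<ge> 1" using subobj_series_length_pos Q nonzero unfolding composition_series_def by blast
    obtain Xs ks where K: "composition_series C E (ccod C i) (n + m) Xs ks" "shifted_factors_iso C E gs ks n m"
      using composition_series_glue[OF A c Q m] by blast
    have "series_between C E (Xs 0) (ccod C i) (n + m) Xs ks"
      using K(1) unfolding composition_series_def subobj_series_iff_series_between by blast
    moreover have "n + j \<in> {1..n + m}" using j by auto
    ultimately obtain Z' where Z': "series_factor C E ks (n + j) Z'"
      by (blast dest: series_between_factor_exists)
    have "factors_satisfy C E (\<lambda>Z. Z \<in> U) ks (n + m)"
      using B K(1) unfolding objs_with_factors_in_def by blast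
    then have "Z' \<in> U" using Z' j unfolding factors_satisfy_def by auto
    moreover have "iso_obj C W Z'" using K(2) j W Z' iso_obj_sym unfolding shifted_factors_iso_def by blast
    ultimately show "W \<in> U" using U series_factor_in_E W unfolding iso_closed_def by blast
  qed
  then show ?thesis unfolding objs_with_factors_in_def using cd by blast
qed

lemma objs_with_factors_in_extension:
  assumes len: "length_cat C E" and jh: "jordan_hoelder C E" and U: "iso_closed (\<lambda>Z. Z \<in> U)"
    and c: "conflation C E i p" and nonzero: "\<not> zero_obj C (ccod C p)"
    and A: "cdom C i \<in> objs_with_factors_in U" and Q: "ccod C p \<in> objs_with_factors_in U"
  shows "ccod C i \<in> objs_with_factors_in U"
proof -
  note cd = conflationD[OF c]
  obtain n As fa where A': "composition_series C E (cdom C i) n As fa"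
    using composition_series_exists[OF len cd(3)] by blast
  obtain m Cs gs where Q': "composition_series C E (ccod C p) m Cs gs"
    using composition_series_exists[OF len cd(5)] by blast
  have m: "m \<ge> 1" using subobj_series_length_pos Q' nonzero unfolding composition_series_def by blast
  obtain Xs ks where K: "composition_series C E (ccod C i) (n + m) Xs ks" "\<forall>k\<le>n. ks k = fa k"
    "shifted_factors_iso C E gs ks n m"
    using composition_series_glue[OF A' c Q' m] by blast
  have "factors_satisfy C E (\<lambda>Z. Z \<in> U) ks (n + m)"
    using factors_satisfy_glue[OF U _ _ _ K(2,3)] A A' Q Q'
    unfolding objs_with_factors_in_def composition_series_def by blast
  then show ?thesis
    using jordan_hoelder_factors_satisfy[OF jh U cd(4) K(1)] cd unfolding objs_with_factors_in_def by blast
qed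

lemma zero_obj_in_objs_with_factors_in: "zero_obj C Z \<Longrightarrow> Z \<in> E \<Longrightarrow> Z \<in> objs_with_factors_in U"
  unfolding objs_with_factors_in_def factors_satisfy_def using composition_series_zero_obj_length by auto

lemma serre_subcat_objs_with_factors_in:
  assumes len: "length_cat C E" and jh: "jordan_hoelder C E" and U: "iso_closed (\<lambda>Z. Z \<in> U)"
  shows "serre_subcat C E (objs_with_factors_in U)"
proof -
  let ?T = "objs_with_factors_in U"
  have conf: "ccod C i \<in> ?T \<longleftrightarrow> cdom C i \<in> ?T \<and> ccod C p \<in> ?T" if c: "conflation C E i p" for i p
  proof (cases "zero_obj C (ccod C p)")
    case True
    then have "iso_obj C (cdom C i) (ccod C i)"
      using iso_mor_iso_obj conflation_zero_cokernel_iso[OF c] by blast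
    moreover have "ccod C p \<in> ?T" using zero_obj_in_objs_with_factors_in True conflationD[OF c] by blast
    ultimately show ?thesis using objs_with_factors_in_iso iso_obj_sym conflationD[OF c] by blast
  next
    case False
    then show ?thesis using objs_with_factors_in_sub[OF len c] objs_with_factors_in_quotient[OF len U c]
        objs_with_factors_in_extension[OF len jh U c] by blast
  qed
  have "P \<in> ?T" if A: "A \<in> ?T" and B: "B \<in> ?T" and b: "is_biproduct C A B P i1 i2 p1 p2"
    for A B P i1 i2 p1 p2
  proof -
    have "conflation C E i1 p2" using biproduct_conflation[OF b] A B unfolding objs_with_factors_in_def by blast
    then show ?thesis using conf A B biproduct_arrD[OF b] by metis
  qed
  moreover obtain Z where "Z \<in> E" "zero_obj C Z" using E_zero_obj by blast
  moreover have "?T \<subseteq> E" unfolding objs_with_factors_in_def by blast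
  ultimately show ?thesis unfolding serre_subcat_def
    using conf objs_with_factors_in_iso iso_obj_sym zero_obj_in_objs_with_factors_in by blast
qed

lemma iso_closed_Union_simp_classes: "\<X> \<subseteq> simp_classes C E \<Longrightarrow> iso_closed (\<lambda>Z. Z \<in> \<Union>\<X>)"
  unfolding iso_closed_def simp_classes_def iso_class_def using iso_obj_trans by blast

lemma Union_simp_classes_subset_objs_with_factors_in:
  assumes jh: "jordan_hoelder C E" and \<X>: "\<X> \<subseteq> simp_classes C E"
  shows "\<Union>\<X> \<subseteq> objs_with_factors_in (\<Union>\<X>)"
proof
  fix S assume S: "S \<in> \<Union>\<X>"
  then obtain S0 where S0: "simple_obj C E S0" "S \<in> iso_class C E S0"
    using \<X> unfolding simp_classes_def by blast
  then have SE: "S \<in> E" and "iso_obj C S S0" unfolding iso_class_def by auto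
  then have simple: "simple_obj C E S" using simple_obj_iso[OF S0(1)] by blast
  obtain Z where Z: "Z \<in> E" "zero_obj C Z" using E_zero_obj by blast
  have U: "iso_closed (\<lambda>Z. Z \<in> \<Union>\<X>)" using iso_closed_Union_simp_classes[OF \<X>] .
  note one_step = one_step_composition_series[OF Z(2,1) simple]
    one_step_series_factors_satisfy[OF Z(2,1) SE U S]
  have "factors_satisfy C E (\<lambda>Z. Z \<in> \<Union>\<X>) fs n" if "composition_series C E S n Xs fs" for n Xs fs
    using jordan_hoelder_factors_satisfy[OF jh U SE one_step that] .
  then show "S \<in> objs_with_factors_in (\<Union>\<X>)" unfolding objs_with_factors_in_def using SE by blast
qed

lemma simple_obj_notin_objs_with_factors_in:
  assumes \<X>: "\<X> \<subseteq> simp_classes C E" and S: "simple_obj C E S" and notin: "iso_class C E S \<notin> \<X>"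
  shows "S \<notin> objs_with_factors_in (\<Union>\<X>)"
proof
  assume ST: "S \<in> objs_with_factors_in (\<Union>\<X>)"
  have SE: "S \<in> E" using S unfolding simple_obj_def by blast
  obtain Z where Z: "Z \<in> E" "zero_obj C Z" using E_zero_obj by blast
  have "conflation C E (czero C Z S) (cid C S)" using conflation_zero_id Z SE by blast
  then have "series_factor C E (\<lambda>_. czero C Z S) 1 S"
    unfolding series_factor_def using E_Ob SE by (auto simp: comp_simps)
  then have "S \<in> \<Union>\<X>"
    using ST one_step_composition_series[OF Z(2,1) S] unfolding objs_with_factors_in_def factors_satisfy_def by auto
  then obtain S0 where S0: "iso_class C E S0 \<in> \<X>" "S \<in> iso_class C E S0" "S0 \<in> E"
    using \<X> unfolding simp_classes_def simple_obj_def by blast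
  then have "iso_class C E S = iso_class C E S0" using iso_class_eq[OF SE S0(3)] unfolding iso_class_def by blast
  then show False using notin S0(1) by simp
qed

lemma serre_closure_Union_simp_classes_subsetD:
  assumes len: "length_cat C E" and jh: "jordan_hoelder C E"
    and \<X>: "\<X> \<subseteq> simp_classes C E" and \<Y>: "\<Y> \<subseteq> simp_classes C E"
    and le: "serre_closure C E (\<Union>\<X>) \<subseteq> serre_closure C E (\<Union>\<Y>)"
  shows "\<X> \<subseteq> \<Y>"
proof
  fix K assume K: "K \<in> \<X>"
  then obtain S where S: "simple_obj C E S" "K = iso_class C E S" using \<X> unfolding simp_classes_def by blast
  then have "S \<in> \<Union>\<X>" using K iso_class_self unfolding simple_obj_def by blast
  then have "S \<in> serre_closure C E (\<Union>\<Y>)" using serre_closure_upper le by blast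
  moreover have "serre_closure C E (\<Union>\<Y>) \<subseteq> objs_with_factors_in (\<Union>\<Y>)"
    by (rule serre_closure_least[OF serre_subcat_objs_with_factors_in[OF len jh iso_closed_Union_simp_classes[OF \<Y>]]
      Union_simp_classes_subset_objs_with_factors_in[OF jh \<Y>]])
  ultimately have "S \<in> objs_with_factors_in (\<Union>\<Y>)" by blast
  then show "K \<in> \<Y>" using simple_obj_notin_objs_with_factors_in[OF \<Y> S(1)] S(2) by blast
qed

lemma serre_subcats_eq_serre_closure_image:
  assumes len: "length_cat C E"
  shows "(\<lambda>\<X>. serre_closure C E (\<Union>\<X>)) ` Pow (simp_classes C E) = serre_subcats C E"
proof
  show "(\<lambda>\<X>. serre_closure C E (\<Union>\<X>)) ` Pow (simp_classes C E) \<subseteq> serre_subcats C E"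
    unfolding serre_subcats_def using serre_closure_serre_subcat Union_simp_classes_subset_E by auto
  show "serre_subcats C E \<subseteq> (\<lambda>\<X>. serre_closure C E (\<Union>\<X>)) ` Pow (simp_classes C E)"
  proof
    fix S assume "S \<in> serre_subcats C E"
    then have "S = serre_closure C E (\<Union>{K \<in> simp_classes C E. K \<subseteq> S})"
      using serre_subcat_generated_by_simples[OF len] unfolding serre_subcats_def by blast
    then show "S \<in> (\<lambda>\<X>. serre_closure C E (\<Union>\<X>)) ` Pow (simp_classes C E)" by blast
  qed
qed

end


theorem mainTheorem14:
  fixes C :: "('o, 'm) acat" and E :: "'o set"
  assumes "exact_cat C E" and "length_cat C E" and "jordan_hoelder C E"
  shows "bij_betw (\<lambda>\<X>. serre_closure C E (\<Union>\<X>)) (Pow (simp_classes C E)) (serre_subcats C E)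
    \<and> (\<forall>\<X>\<in>Pow (simp_classes C E). \<forall>\<Y>\<in>Pow (simp_classes C E).
         \<X> \<subseteq> \<Y> \<longrightarrow> serre_closure C E (\<Union>\<X>) \<subseteq> serre_closure C E (\<Union>\<Y>))"
proof -
  have "abelian C" using assms(1) unfolding exact_cat_def by blast
  then interpret exact_category C E
    using assms(1) by (simp add: exact_category_def abelian_category_def exact_category_axioms_def)
  have "inj_on (\<lambda>\<X>. serre_closure C E (\<Union>\<X>)) (Pow (simp_classes C E))"
    using serre_closure_Union_simp_classes_subsetD[OF assms(2,3)] by (intro inj_onI) (blast intro: subset_antisym)
  then show ?thesis
    using serre_subcats_eq_serre_closure_image[OF assms(2)] serre_closure_mono
    unfolding bij_betw_def by (simp add: Union_mono)
qed

end
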